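(* Let $\mathcal{A}$ and $\mathcal{B}$ be monoidal categories (not necessarily strict). Then $\mathcal{A}$ and $\mathcal{B}$ are monoidally equivalent if and only if there exist a monoidal category $\mathcal{C}$ and strict monoidal functors $P\colon \mathcal{C}\to\mathcal{A}$ and $Q\colon\mathcal{C}\to\mathcal{B}$ each of which is a surjective equivalence.
   Context: Monoidal categories $\mathcal{A},\mathcal{B}$ are monoidally equivalent if there exist strong monoidal functors $F\colon\mathcal{A}\to\mathcal{B}$, $G\colon\mathcal{B}\to\mathcal{A}$ and monoidal natural isomorphisms $1_{\mathcal{A}}\cong GF$ and $FG\cong 1_{\mathcal{B}}$. A strict monoidal functor is a monoidal functor whose coherence maps are identities, so that e.g. $P(c\otimes c') = P(c)\otimes P(c')$ and $P(I)=I$ as objects (the monoidal categories themselves need not be strict). A functor is a surjective equivalence if it is surjective on objects (genuinely), full, and faithful. *)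

theory Defs
  imports Main
begin

record ('o, 'm) moncat =
  cObj :: "'o set"
  cArr :: "'m set"
  cDom :: "'m \<Rightarrow> 'o"
  cCod :: "'m \<Rightarrow> 'o"
  cId  :: "'o \<Rightarrow> 'm"
  cComp :: "'m \<Rightarrow> 'm \<Rightarrow> 'm"   (* cComp C g f = g o f *)
  cTo :: "'o \<Rightarrow> 'o \<Rightarrow> 'o"
  cTa :: "'m \<Rightarrow> 'm \<Rightarrow> 'm"
  cUnit :: "'o"
  cAssoc :: "'o \<Rightarrow> 'o \<Rightarrow> 'o \<Rightarrow> 'm"  (* (a (x) b) (x) c -> a (x) (b (x) c) *)
  cLunit :: "'o \<Rightarrow> 'm"                (* I (x) a -> a *)
  cRunit :: "'o \<Rightarrow> 'm"                (* a (x) I -> a *)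

definition hom :: "('o, 'm) moncat \<Rightarrow> 'o \<Rightarrow> 'o \<Rightarrow> 'm set" where
  "hom C a b = {f \<in> cArr C. cDom C f = a \<and> cCod C f = b}"

definition category :: "('o, 'm) moncat \<Rightarrow> bool" where
  "category C \<longleftrightarrow>
     (\<forall>f\<in>cArr C. cDom C f \<in> cObj C \<and> cCod C f \<in> cObj C)
   \<and> (\<forall>a\<in>cObj C. cId C a \<in> hom C a a)
   \<and> (\<forall>f\<in>cArr C. \<forall>g\<in>cArr C. cCod C f = cDom C g \<longrightarrow>
          cComp C g f \<in> hom C (cDom C f) (cCod C g))
   \<and> (\<forall>f\<in>cArr C. cComp C f (cId C (cDom C f)) = f \<and> cComp C (cId C (cCod C f)) f = f)
   \<and> (\<forall>f\<in>cArr C. \<forall>g\<in>cArr C. \<forall>h\<in>cArr C. cCod C f = cDom C g \<and> cCod C g = cDom C h \<longrightarrow>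
          cComp C h (cComp C g f) = cComp C (cComp C h g) f)"

definition iso :: "('o, 'm) moncat \<Rightarrow> 'm \<Rightarrow> bool" where
  "iso C f \<longleftrightarrow> f \<in> cArr C \<and>
     (\<exists>g\<in>hom C (cCod C f) (cDom C f).
        cComp C g f = cId C (cDom C f) \<and> cComp C f g = cId C (cCod C f))"

definition monoidal_category :: "('o, 'm) moncat \<Rightarrow> bool" where
  "monoidal_category C \<longleftrightarrow> category C
   \<comment> \<open>tensor is a bifunctor\<close>
   \<and> (\<forall>a\<in>cObj C. \<forall>b\<in>cObj C. cTo C a b \<in> cObj C)
   \<and> (\<forall>f\<in>cArr C. \<forall>g\<in>cArr C. cTa C f g \<in>
          hom C (cTo C (cDom C f) (cDom C g)) (cTo C (cCod C f) (cCod C g)))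
   \<and> (\<forall>a\<in>cObj C. \<forall>b\<in>cObj C. cTa C (cId C a) (cId C b) = cId C (cTo C a b))
   \<and> (\<forall>f\<in>cArr C. \<forall>f'\<in>cArr C. \<forall>g\<in>cArr C. \<forall>g'\<in>cArr C.
          cCod C f = cDom C f' \<and> cCod C g = cDom C g' \<longrightarrow>
          cTa C (cComp C f' f) (cComp C g' g) = cComp C (cTa C f' g') (cTa C f g))
   \<and> cUnit C \<in> cObj C
   \<comment> \<open>associator: natural isomorphism\<close>
   \<and> (\<forall>a\<in>cObj C. \<forall>b\<in>cObj C. \<forall>c\<in>cObj C.
          cAssoc C a b c \<in> hom C (cTo C (cTo C a b) c) (cTo C a (cTo C b c))
          \<and> iso C (cAssoc C a b c))
   \<and> (\<forall>f\<in>cArr C. \<forall>g\<in>cArr C. \<forall>h\<in>cArr C.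
          cComp C (cAssoc C (cCod C f) (cCod C g) (cCod C h)) (cTa C (cTa C f g) h)
        = cComp C (cTa C f (cTa C g h)) (cAssoc C (cDom C f) (cDom C g) (cDom C h)))
   \<comment> \<open>unitors: natural isomorphisms\<close>
   \<and> (\<forall>a\<in>cObj C. cLunit C a \<in> hom C (cTo C (cUnit C) a) a \<and> iso C (cLunit C a))
   \<and> (\<forall>a\<in>cObj C. cRunit C a \<in> hom C (cTo C a (cUnit C)) a \<and> iso C (cRunit C a))
   \<and> (\<forall>f\<in>cArr C. cComp C (cLunit C (cCod C f)) (cTa C (cId C (cUnit C)) f)
                  = cComp C f (cLunit C (cDom C f)))
   \<and> (\<forall>f\<in>cArr C. cComp C (cRunit C (cCod C f)) (cTa C f (cId C (cUnit C)))
                  = cComp C f (cRunit C (cDom C f)))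
   \<comment> \<open>pentagon\<close>
   \<and> (\<forall>a\<in>cObj C. \<forall>b\<in>cObj C. \<forall>c\<in>cObj C. \<forall>d\<in>cObj C.
          cComp C (cAssoc C a b (cTo C c d)) (cAssoc C (cTo C a b) c d)
        = cComp C (cTa C (cId C a) (cAssoc C b c d))
            (cComp C (cAssoc C a (cTo C b c) d) (cTa C (cAssoc C a b c) (cId C d))))
   \<comment> \<open>triangle\<close>
   \<and> (\<forall>a\<in>cObj C. \<forall>b\<in>cObj C.
          cComp C (cTa C (cId C a) (cLunit C b)) (cAssoc C a (cUnit C) b)
        = cTa C (cRunit C a) (cId C b))"

record ('o, 'm, 'p, 'n) mfun =
  FO :: "'o \<Rightarrow> 'p"
  FA :: "'m \<Rightarrow> 'n"
  Mu :: "'o \<Rightarrow> 'o \<Rightarrow> 'n"   (* F a (x) F b -> F (a (x) b) *)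
  Eps :: "'n"                (* I -> F I *)

definition is_functor ::
  "('o, 'm) moncat \<Rightarrow> ('p, 'n) moncat \<Rightarrow> ('o, 'm, 'p, 'n) mfun \<Rightarrow> bool" where
  "is_functor C D F \<longleftrightarrow>
     (\<forall>a\<in>cObj C. FO F a \<in> cObj D)
   \<and> (\<forall>f\<in>cArr C. FA F f \<in> hom D (FO F (cDom C f)) (FO F (cCod C f)))
   \<and> (\<forall>a\<in>cObj C. FA F (cId C a) = cId D (FO F a))
   \<and> (\<forall>f\<in>cArr C. \<forall>g\<in>cArr C. cCod C f = cDom C g \<longrightarrow>
          FA F (cComp C g f) = cComp D (FA F g) (FA F f))"

definition strong_monoidal_functor ::
  "('o, 'm) moncat \<Rightarrow> ('p, 'n) moncat \<Rightarrow> ('o, 'm, 'p, 'n) mfun \<Rightarrow> bool" where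
  "strong_monoidal_functor C D F \<longleftrightarrow>
     monoidal_category C \<and> monoidal_category D \<and> is_functor C D F
   \<and> (\<forall>a\<in>cObj C. \<forall>b\<in>cObj C.
          Mu F a b \<in> hom D (cTo D (FO F a) (FO F b)) (FO F (cTo C a b)) \<and> iso D (Mu F a b))
   \<and> (\<forall>f\<in>cArr C. \<forall>g\<in>cArr C.
          cComp D (Mu F (cCod C f) (cCod C g)) (cTa D (FA F f) (FA F g))
        = cComp D (FA F (cTa C f g)) (Mu F (cDom C f) (cDom C g)))
   \<and> Eps F \<in> hom D (cUnit D) (FO F (cUnit C)) \<and> iso D (Eps F)
   \<and> (\<forall>a\<in>cObj C. \<forall>b\<in>cObj C. \<forall>c\<in>cObj C.
          cComp D (FA F (cAssoc C a b c))
            (cComp D (Mu F (cTo C a b) c) (cTa D (Mu F a b) (cId D (FO F c))))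
        = cComp D (Mu F a (cTo C b c))
            (cComp D (cTa D (cId D (FO F a)) (Mu F b c))
               (cAssoc D (FO F a) (FO F b) (FO F c))))
   \<and> (\<forall>a\<in>cObj C.
          cComp D (FA F (cLunit C a))
            (cComp D (Mu F (cUnit C) a) (cTa D (Eps F) (cId D (FO F a))))
        = cLunit D (FO F a))
   \<and> (\<forall>a\<in>cObj C.
          cComp D (FA F (cRunit C a))
            (cComp D (Mu F a (cUnit C)) (cTa D (cId D (FO F a)) (Eps F)))
        = cRunit D (FO F a))"

definition strict_monoidal_functor ::
  "('o, 'm) moncat \<Rightarrow> ('p, 'n) moncat \<Rightarrow> ('o, 'm, 'p, 'n) mfun \<Rightarrow> bool" where
  "strict_monoidal_functor C D F \<longleftrightarrow>
     strong_monoidal_functor C D F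
   \<and> (\<forall>a\<in>cObj C. \<forall>b\<in>cObj C.
          FO F (cTo C a b) = cTo D (FO F a) (FO F b)
        \<and> Mu F a b = cId D (cTo D (FO F a) (FO F b)))
   \<and> FO F (cUnit C) = cUnit D \<and> Eps F = cId D (cUnit D)"

definition mid :: "('o, 'm) moncat \<Rightarrow> ('o, 'm, 'o, 'm) mfun" where
  "mid C = \<lparr>FO = (\<lambda>a. a), FA = (\<lambda>f. f), Mu = (\<lambda>a b. cId C (cTo C a b)), Eps = cId C (cUnit C)\<rparr>"

text \<open>mcomp E F G is the composite G F (first F, then G), E the target of G.\<close>
definition mcomp ::
  "('q, 'k) moncat \<Rightarrow> ('o, 'm, 'p, 'n) mfun \<Rightarrow> ('p, 'n, 'q, 'k) mfun \<Rightarrow> ('o, 'm, 'q, 'k) mfun" where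
  "mcomp E F G = \<lparr>FO = (\<lambda>a. FO G (FO F a)), FA = (\<lambda>f. FA G (FA F f)),
      Mu = (\<lambda>a b. cComp E (FA G (Mu F a b)) (Mu G (FO F a) (FO F b))),
      Eps = cComp E (FA G (Eps F)) (Eps G)\<rparr>"

definition monoidal_nat_iso ::
  "('o, 'm) moncat \<Rightarrow> ('p, 'n) moncat \<Rightarrow> ('o, 'm, 'p, 'n) mfun \<Rightarrow> ('o, 'm, 'p, 'n) mfun
     \<Rightarrow> ('o \<Rightarrow> 'n) \<Rightarrow> bool" where
  "monoidal_nat_iso C D F G \<theta> \<longleftrightarrow>
     (\<forall>a\<in>cObj C. \<theta> a \<in> hom D (FO F a) (FO G a) \<and> iso D (\<theta> a))
   \<and> (\<forall>f\<in>cArr C. cComp D (\<theta> (cCod C f)) (FA F f) = cComp D (FA G f) (\<theta> (cDom C f)))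
   \<and> (\<forall>a\<in>cObj C. \<forall>b\<in>cObj C.
          cComp D (\<theta> (cTo C a b)) (Mu F a b) = cComp D (Mu G a b) (cTa D (\<theta> a) (\<theta> b)))
   \<and> cComp D (\<theta> (cUnit C)) (Eps F) = Eps G"

definition monoidally_equivalent :: "('a, 'am) moncat \<Rightarrow> ('b, 'bm) moncat \<Rightarrow> bool" where
  "monoidally_equivalent A B \<longleftrightarrow>
     (\<exists>(F :: ('a, 'am, 'b, 'bm) mfun) (G :: ('b, 'bm, 'a, 'am) mfun) \<eta> \<epsilon>.
        strong_monoidal_functor A B F \<and> strong_monoidal_functor B A G
      \<and> monoidal_nat_iso A A (mid A) (mcomp A F G) \<eta>
      \<and> monoidal_nat_iso B B (mcomp B G F) (mid B) \<epsilon>)"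

definition surjective_equivalence ::
  "('o, 'm) moncat \<Rightarrow> ('p, 'n) moncat \<Rightarrow> ('o, 'm, 'p, 'n) mfun \<Rightarrow> bool" where
  "surjective_equivalence C D F \<longleftrightarrow> is_functor C D F
   \<and> (\<forall>b\<in>cObj D. \<exists>a\<in>cObj C. FO F a = b)
   \<and> (\<forall>a\<in>cObj C. \<forall>b\<in>cObj C. \<forall>g\<in>hom D (FO F a) (FO F b). \<exists>f\<in>hom C a b. FA F f = g)
   \<and> (\<forall>a\<in>cObj C. \<forall>b\<in>cObj C. \<forall>f\<in>hom C a b. \<forall>f'\<in>hom C a b. FA F f = FA F f' \<longrightarrow> f = f')"

end

theory Submission
  imports Defs
begin

text \<open>Given a monoidal equivalence \<open>(F, G)\<close>, take for \<open>C\<close> the iso-comma category of \<open>F\<close>, whose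
  objects are triples \<open>(a, b, p)\<close> with \<open>p : b \<cong> F a\<close>, tensored by means of the structure maps of \<open>F\<close>.
  Both projections are strict monoidal; the first is a surjective equivalence for any \<open>F\<close>, the second
  because \<open>F\<close> is full, faithful and essentially surjective.
  Conversely, given strict surjective equivalences \<open>P : C \<rightarrow> A\<close> and \<open>Q : C \<rightarrow> B\<close>, choosing preimages
  under \<open>P\<close> defines \<open>F = Q \<circ> P\<^sup>-\<^sup>1 : A \<rightarrow> B\<close>, and symmetrically \<open>G = P \<circ> Q\<^sup>-\<^sup>1\<close>. Every equation
  required of \<open>F\<close>, \<open>G\<close> and the unit and counit lifts to \<open>C\<close>, where it holds because \<open>P\<close> and \<open>Q\<close>
  are strict and faithful.\<close>

lemma in_hom [simp]: "f \<in> hom C a b \<longleftrightarrow> f \<in> cArr C \<and> cDom C f = a \<and> cCod C f = b"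
  by (simp add: hom_def)

lemma isoI:
  assumes "f \<in> cArr C" "g \<in> hom C (cCod C f) (cDom C f)"
    and "cComp C g f = cId C (cDom C f)" "cComp C f g = cId C (cCod C f)"
  shows "iso C f"
  using assms unfolding iso_def by blast

lemma mid_simps [simp]:
  "FO (mid C) = (\<lambda>a. a)" "FA (mid C) = (\<lambda>f. f)" "Mu (mid C) a b = cId C (cTo C a b)"
  "Eps (mid C) = cId C (cUnit C)"
  by (simp_all add: mid_def)

lemma mcomp_simps [simp]:
  "FO (mcomp E F G) a = FO G (FO F a)" "FA (mcomp E F G) f = FA G (FA F f)"
  "Mu (mcomp E F G) a b = cComp E (FA G (Mu F a b)) (Mu G (FO F a) (FO F b))"
  "Eps (mcomp E F G) = cComp E (FA G (Eps F)) (Eps G)"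
  by (simp_all add: mcomp_def)

locale monoidal_cat =
  fixes C :: "('o, 'm) moncat"
  assumes monoidal: "monoidal_category C"
begin

lemma category: "category C"
  using monoidal by (simp add: monoidal_category_def)

lemma dom_obj [simp]: "f \<in> cArr C \<Longrightarrow> cDom C f \<in> cObj C"
  and cod_obj [simp]: "f \<in> cArr C \<Longrightarrow> cCod C f \<in> cObj C"
  and id_arr [simp]: "a \<in> cObj C \<Longrightarrow> cId C a \<in> cArr C"
  and id_dom [simp]: "a \<in> cObj C \<Longrightarrow> cDom C (cId C a) = a"
  and id_cod [simp]: "a \<in> cObj C \<Longrightarrow> cCod C (cId C a) = a"
  and comp_arr [simp]: "f \<in> cArr C \<Longrightarrow> g \<in> cArr C \<Longrightarrow> cCod C f = cDom C g \<Longrightarrow> cComp C g f \<in> cArr C"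
  and comp_dom [simp]:
    "f \<in> cArr C \<Longrightarrow> g \<in> cArr C \<Longrightarrow> cCod C f = cDom C g \<Longrightarrow> cDom C (cComp C g f) = cDom C f"
  and comp_cod [simp]:
    "f \<in> cArr C \<Longrightarrow> g \<in> cArr C \<Longrightarrow> cCod C f = cDom C g \<Longrightarrow> cCod C (cComp C g f) = cCod C g"
  and comp_id_right [simp]: "f \<in> cArr C \<Longrightarrow> cDom C f = a \<Longrightarrow> cComp C f (cId C a) = f"
  and comp_id_left [simp]: "f \<in> cArr C \<Longrightarrow> cCod C f = a \<Longrightarrow> cComp C (cId C a) f = f"
  using category unfolding category_def by auto

lemma comp_assoc [simp]:
  "f \<in> cArr C \<Longrightarrow> g \<in> cArr C \<Longrightarrow> h \<in> cArr C \<Longrightarrow> cCod C f = cDom C g \<Longrightarrow> cCod C g = cDom C h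
   \<Longrightarrow> cComp C (cComp C h g) f = cComp C h (cComp C g f)"
  using category unfolding category_def by metis

text \<open>The simplifier normalises composites to the right; these two rules let it rewrite a
  composite of two (three) arrows that occurs as a prefix of a longer right-nested composite.\<close>

lemma comp_reassoc:
  "cComp C h k = e \<Longrightarrow> h \<in> cArr C \<Longrightarrow> k \<in> cArr C \<Longrightarrow> x \<in> cArr C \<Longrightarrow>
   cCod C x = cDom C k \<Longrightarrow> cCod C k = cDom C h \<Longrightarrow> cComp C h (cComp C k x) = cComp C e x"
  by (metis comp_assoc)

lemma comp_reassoc3:
  "cComp C h (cComp C k l) = e \<Longrightarrow> h \<in> cArr C \<Longrightarrow> k \<in> cArr C \<Longrightarrow> l \<in> cArr C \<Longrightarrow> x \<in> cArr C \<Longrightarrow>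
   cCod C x = cDom C l \<Longrightarrow> cCod C l = cDom C k \<Longrightarrow> cCod C k = cDom C h \<Longrightarrow>
   cComp C h (cComp C k (cComp C l x)) = cComp C e x"
  by (metis comp_assoc comp_arr comp_dom comp_cod)

lemma tensor_obj [simp]: "a \<in> cObj C \<Longrightarrow> b \<in> cObj C \<Longrightarrow> cTo C a b \<in> cObj C"
  and tensor_arr [simp]: "f \<in> cArr C \<Longrightarrow> g \<in> cArr C \<Longrightarrow> cTa C f g \<in> cArr C"
  and tensor_dom [simp]:
    "f \<in> cArr C \<Longrightarrow> g \<in> cArr C \<Longrightarrow> cDom C (cTa C f g) = cTo C (cDom C f) (cDom C g)"
  and tensor_cod [simp]:
    "f \<in> cArr C \<Longrightarrow> g \<in> cArr C \<Longrightarrow> cCod C (cTa C f g) = cTo C (cCod C f) (cCod C g)"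
  and tensor_id [simp]:
    "a \<in> cObj C \<Longrightarrow> b \<in> cObj C \<Longrightarrow> cTa C (cId C a) (cId C b) = cId C (cTo C a b)"
  and interchange:
    "f \<in> cArr C \<Longrightarrow> f' \<in> cArr C \<Longrightarrow> g \<in> cArr C \<Longrightarrow> g' \<in> cArr C \<Longrightarrow>
     cCod C f = cDom C f' \<Longrightarrow> cCod C g = cDom C g' \<Longrightarrow>
     cTa C (cComp C f' f) (cComp C g' g) = cComp C (cTa C f' g') (cTa C f g)"
  and unit_obj [simp]: "cUnit C \<in> cObj C"
  using monoidal by (simp_all add: monoidal_category_def)

lemma assoc_arr [simp]:
    "a \<in> cObj C \<Longrightarrow> b \<in> cObj C \<Longrightarrow> c \<in> cObj C \<Longrightarrow> cAssoc C a b c \<in> cArr C"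
  and assoc_dom [simp]:
    "a \<in> cObj C \<Longrightarrow> b \<in> cObj C \<Longrightarrow> c \<in> cObj C \<Longrightarrow> cDom C (cAssoc C a b c) = cTo C (cTo C a b) c"
  and assoc_cod [simp]:
    "a \<in> cObj C \<Longrightarrow> b \<in> cObj C \<Longrightarrow> c \<in> cObj C \<Longrightarrow> cCod C (cAssoc C a b c) = cTo C a (cTo C b c)"
  and assoc_iso: "a \<in> cObj C \<Longrightarrow> b \<in> cObj C \<Longrightarrow> c \<in> cObj C \<Longrightarrow> iso C (cAssoc C a b c)"
  and assoc_naturality:
    "f \<in> cArr C \<Longrightarrow> g \<in> cArr C \<Longrightarrow> h \<in> cArr C \<Longrightarrow>
     cComp C (cAssoc C (cCod C f) (cCod C g) (cCod C h)) (cTa C (cTa C f g) h)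
     = cComp C (cTa C f (cTa C g h)) (cAssoc C (cDom C f) (cDom C g) (cDom C h))"
  and lunit_arr [simp]: "a \<in> cObj C \<Longrightarrow> cLunit C a \<in> cArr C"
  and lunit_dom [simp]: "a \<in> cObj C \<Longrightarrow> cDom C (cLunit C a) = cTo C (cUnit C) a"
  and lunit_cod [simp]: "a \<in> cObj C \<Longrightarrow> cCod C (cLunit C a) = a"
  and lunit_iso: "a \<in> cObj C \<Longrightarrow> iso C (cLunit C a)"
  and runit_arr [simp]: "a \<in> cObj C \<Longrightarrow> cRunit C a \<in> cArr C"
  and runit_dom [simp]: "a \<in> cObj C \<Longrightarrow> cDom C (cRunit C a) = cTo C a (cUnit C)"
  and runit_cod [simp]: "a \<in> cObj C \<Longrightarrow> cCod C (cRunit C a) = a"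
  and runit_iso: "a \<in> cObj C \<Longrightarrow> iso C (cRunit C a)"
  and lunit_naturality:
    "f \<in> cArr C \<Longrightarrow> cComp C (cLunit C (cCod C f)) (cTa C (cId C (cUnit C)) f)
                    = cComp C f (cLunit C (cDom C f))"
  and runit_naturality:
    "f \<in> cArr C \<Longrightarrow> cComp C (cRunit C (cCod C f)) (cTa C f (cId C (cUnit C)))
                    = cComp C f (cRunit C (cDom C f))"
  and pentagon:
    "a \<in> cObj C \<Longrightarrow> b \<in> cObj C \<Longrightarrow> c \<in> cObj C \<Longrightarrow> d \<in> cObj C \<Longrightarrow>
     cComp C (cAssoc C a b (cTo C c d)) (cAssoc C (cTo C a b) c d)
     = cComp C (cTa C (cId C a) (cAssoc C b c d))
         (cComp C (cAssoc C a (cTo C b c) d) (cTa C (cAssoc C a b c) (cId C d)))"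
  and triangle:
    "a \<in> cObj C \<Longrightarrow> b \<in> cObj C \<Longrightarrow>
     cComp C (cTa C (cId C a) (cLunit C b)) (cAssoc C a (cUnit C) b) = cTa C (cRunit C a) (cId C b)"
  using monoidal by (simp_all add: monoidal_category_def)

lemma iso_arr: "iso C f \<Longrightarrow> f \<in> cArr C"
  by (simp add: iso_def)

lemma iso_inverseE:
  assumes "iso C f"
  obtains g where "g \<in> cArr C" "cDom C g = cCod C f" "cCod C g = cDom C f"
    "cComp C g f = cId C (cDom C f)" "cComp C f g = cId C (cCod C f)"
  using assms unfolding iso_def by auto

lemma iso_id: "a \<in> cObj C \<Longrightarrow> iso C (cId C a)"
  by (rule isoI[where g = "cId C a"]) auto

lemma iso_comp:
  assumes f: "iso C f" and g: "iso C g" and fg: "cCod C f = cDom C g"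
  shows "iso C (cComp C g f)"
proof -
  obtain f' where f': "f' \<in> cArr C" "cDom C f' = cCod C f" "cCod C f' = cDom C f"
    "cComp C f' f = cId C (cDom C f)" "cComp C f f' = cId C (cCod C f)"
    using iso_inverseE[OF f] by blast
  obtain g' where g': "g' \<in> cArr C" "cDom C g' = cCod C g" "cCod C g' = cDom C g"
    "cComp C g' g = cId C (cDom C g)" "cComp C g g' = cId C (cCod C g)"
    using iso_inverseE[OF g] by blast
  have arrs: "f \<in> cArr C" "g \<in> cArr C"
    using f g iso_arr by auto
  have "cComp C (cComp C f' g') (cComp C g f) = cComp C f' (cComp C (cComp C g' g) f)"
    using arrs f' g' fg by (simp add: comp_reassoc[OF g'(4)])
  also have "\<dots> = cId C (cDom C f)"
    using arrs f' g' fg by simp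
  finally have left: "cComp C (cComp C f' g') (cComp C g f) = cId C (cDom C f)" .
  have "cComp C (cComp C g f) (cComp C f' g') = cComp C g (cComp C (cComp C f f') g')"
    using arrs f'(1-3) g'(1-3) fg by simp
  also have "\<dots> = cId C (cCod C g)"
    using arrs f' g' fg by simp
  finally have right: "cComp C (cComp C g f) (cComp C f' g') = cId C (cCod C g)" .
  show ?thesis
    by (rule isoI[where g = "cComp C f' g'"]) (use arrs f' g' fg left right in auto)
qed

lemma iso_tensor:
  assumes f: "iso C f" and g: "iso C g"
  shows "iso C (cTa C f g)"
proof -
  obtain f' where f': "f' \<in> cArr C" "cDom C f' = cCod C f" "cCod C f' = cDom C f"
    "cComp C f' f = cId C (cDom C f)" "cComp C f f' = cId C (cCod C f)"
    using iso_inverseE[OF f] by blast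
  obtain g' where g': "g' \<in> cArr C" "cDom C g' = cCod C g" "cCod C g' = cDom C g"
    "cComp C g' g = cId C (cDom C g)" "cComp C g g' = cId C (cCod C g)"
    using iso_inverseE[OF g] by blast
  have arrs: "f \<in> cArr C" "g \<in> cArr C"
    using f g iso_arr by auto
  show ?thesis
    by (rule isoI[where g = "cTa C f' g'"]) (use arrs f' g' in \<open>simp_all add: interchange[symmetric]\<close>)
qed

lemma iso_cancel_left:
  assumes m: "iso C m" and xy: "x \<in> cArr C" "y \<in> cArr C" "cCod C x = cDom C m" "cCod C y = cDom C m"
    and eq: "cComp C m x = cComp C m y"
  shows "x = y"
proof -
  obtain m' where m': "m' \<in> cArr C" "cDom C m' = cCod C m" "cCod C m' = cDom C m"
    "cComp C m' m = cId C (cDom C m)"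
    using iso_inverseE[OF m] by blast
  have "cComp C m' (cComp C m x) = x" "cComp C m' (cComp C m y) = y"
    using m xy m' iso_arr by (simp_all add: comp_reassoc[OF m'(4)])
  with eq show ?thesis by metis
qed

lemma iso_cancel_right:
  assumes m: "iso C m" and xy: "x \<in> cArr C" "y \<in> cArr C" "cDom C x = cCod C m" "cDom C y = cCod C m"
    and eq: "cComp C x m = cComp C y m"
  shows "x = y"
proof -
  obtain m' where m': "m' \<in> cArr C" "cDom C m' = cCod C m" "cCod C m' = cDom C m"
    "cComp C m m' = cId C (cCod C m)"
    using iso_inverseE[OF m] by blast
  have "cComp C (cComp C x m) m' = x" "cComp C (cComp C y m) m' = y"
    using m xy m' iso_arr by (simp_all add: comp_reassoc[OF m'(4)])
  with eq show ?thesis by metis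
qed

end

locale strong_monoidal =
  fixes A :: "('a, 'am) moncat" and B :: "('b, 'bm) moncat" and F :: "('a, 'am, 'b, 'bm) mfun"
  assumes strong: "strong_monoidal_functor A B F"
begin

sublocale A: monoidal_cat A
  using strong by unfold_locales (simp add: strong_monoidal_functor_def)

sublocale B: monoidal_cat B
  using strong by unfold_locales (simp add: strong_monoidal_functor_def)

lemma is_functor: "is_functor A B F"
  using strong by (simp add: strong_monoidal_functor_def)

lemma FO_obj [simp]: "a \<in> cObj A \<Longrightarrow> FO F a \<in> cObj B"
  and FA_arr [simp]: "f \<in> cArr A \<Longrightarrow> FA F f \<in> cArr B"
  and FA_dom [simp]: "f \<in> cArr A \<Longrightarrow> cDom B (FA F f) = FO F (cDom A f)"
  and FA_cod [simp]: "f \<in> cArr A \<Longrightarrow> cCod B (FA F f) = FO F (cCod A f)"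
  and FA_id [simp]: "a \<in> cObj A \<Longrightarrow> FA F (cId A a) = cId B (FO F a)"
  and FA_comp [simp]: "f \<in> cArr A \<Longrightarrow> g \<in> cArr A \<Longrightarrow> cCod A f = cDom A g \<Longrightarrow>
    FA F (cComp A g f) = cComp B (FA F g) (FA F f)"
  using is_functor by (simp_all add: is_functor_def)

lemma Mu_arr [simp]: "a \<in> cObj A \<Longrightarrow> b \<in> cObj A \<Longrightarrow> Mu F a b \<in> cArr B"
  and Mu_dom [simp]: "a \<in> cObj A \<Longrightarrow> b \<in> cObj A \<Longrightarrow> cDom B (Mu F a b) = cTo B (FO F a) (FO F b)"
  and Mu_cod [simp]: "a \<in> cObj A \<Longrightarrow> b \<in> cObj A \<Longrightarrow> cCod B (Mu F a b) = FO F (cTo A a b)"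
  and Mu_iso: "a \<in> cObj A \<Longrightarrow> b \<in> cObj A \<Longrightarrow> iso B (Mu F a b)"
  and Mu_naturality: "f \<in> cArr A \<Longrightarrow> g \<in> cArr A \<Longrightarrow>
    cComp B (Mu F (cCod A f) (cCod A g)) (cTa B (FA F f) (FA F g))
    = cComp B (FA F (cTa A f g)) (Mu F (cDom A f) (cDom A g))"
  and Eps_arr [simp]: "Eps F \<in> cArr B"
  and Eps_dom [simp]: "cDom B (Eps F) = cUnit B"
  and Eps_cod [simp]: "cCod B (Eps F) = FO F (cUnit A)"
  and Eps_iso: "iso B (Eps F)"
  and assoc_coherence: "a \<in> cObj A \<Longrightarrow> b \<in> cObj A \<Longrightarrow> c \<in> cObj A \<Longrightarrow>
    cComp B (FA F (cAssoc A a b c))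
      (cComp B (Mu F (cTo A a b) c) (cTa B (Mu F a b) (cId B (FO F c))))
    = cComp B (Mu F a (cTo A b c))
        (cComp B (cTa B (cId B (FO F a)) (Mu F b c)) (cAssoc B (FO F a) (FO F b) (FO F c)))"
  and lunit_coherence: "a \<in> cObj A \<Longrightarrow>
    cComp B (FA F (cLunit A a)) (cComp B (Mu F (cUnit A) a) (cTa B (Eps F) (cId B (FO F a))))
    = cLunit B (FO F a)"
  and runit_coherence: "a \<in> cObj A \<Longrightarrow>
    cComp B (FA F (cRunit A a)) (cComp B (Mu F a (cUnit A)) (cTa B (cId B (FO F a)) (Eps F)))
    = cRunit B (FO F a)"
  using strong by (simp_all add: strong_monoidal_functor_def)

lemma FA_iso:
  assumes f: "iso A f"
  shows "iso B (FA F f)"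
proof -
  obtain g where g: "g \<in> cArr A" "cDom A g = cCod A f" "cCod A g = cDom A f"
    "cComp A g f = cId A (cDom A f)" "cComp A f g = cId A (cCod A f)"
    using A.iso_inverseE[OF f] by blast
  have "f \<in> cArr A"
    using f A.iso_arr by blast
  then show ?thesis
    using g FA_comp[of f g] FA_comp[of g f] by (intro isoI[where g = "FA F g"]) auto
qed

lemma tensor_square_commutes:
  assumes f: "f \<in> cArr A" "cDom A f = a1" "cCod A f = a2"
    and f': "f' \<in> cArr A" "cDom A f' = a1'" "cCod A f' = a2'"
    and g: "g \<in> cArr B" "cDom B g = b1" "cCod B g = b2"
    and g': "g' \<in> cArr B" "cDom B g' = b1'" "cCod B g' = b2'"
    and p1: "p1 \<in> cArr B" "cDom B p1 = b1" "cCod B p1 = FO F a1"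
    and p2: "p2 \<in> cArr B" "cDom B p2 = b2" "cCod B p2 = FO F a2"
    and q1: "q1 \<in> cArr B" "cDom B q1 = b1'" "cCod B q1 = FO F a1'"
    and q2: "q2 \<in> cArr B" "cDom B q2 = b2'" "cCod B q2 = FO F a2'"
    and square1: "cComp B (FA F f) p1 = cComp B p2 g"
    and square2: "cComp B (FA F f') q1 = cComp B q2 g'"
  shows "cComp B (FA F (cTa A f f')) (cComp B (Mu F a1 a1') (cTa B p1 q1))
       = cComp B (cComp B (Mu F a2 a2') (cTa B p2 q2)) (cTa B g g')"
proof -
  have objs: "a1 \<in> cObj A" "a2 \<in> cObj A" "a1' \<in> cObj A" "a2' \<in> cObj A"
    using f f' by (metis A.dom_obj A.cod_obj)+
  have Mu_nat: "cComp B (FA F (cTa A f f')) (Mu F a1 a1') = cComp B (Mu F a2 a2') (cTa B (FA F f) (FA F f'))"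
    using Mu_naturality[of f f'] f f' by simp
  have "cComp B (FA F (cTa A f f')) (cComp B (Mu F a1 a1') (cTa B p1 q1))
      = cComp B (Mu F a2 a2') (cComp B (cTa B (FA F f) (FA F f')) (cTa B p1 q1))"
    using objs f f' p1 q1 by (simp add: B.comp_reassoc[OF Mu_nat])
  also have "\<dots> = cComp B (Mu F a2 a2') (cTa B (cComp B (FA F f) p1) (cComp B (FA F f') q1))"
    using objs f f' p1 q1 by (simp add: B.interchange)
  also have "\<dots> = cComp B (Mu F a2 a2') (cTa B (cComp B p2 g) (cComp B q2 g'))"
    using square1 square2 by simp
  also have "\<dots> = cComp B (cComp B (Mu F a2 a2') (cTa B p2 q2)) (cTa B g g')"
    using objs p2 q2 g g' by (simp add: B.interchange)
  finally show ?thesis .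
qed

lemma assoc_square_commutes:
  assumes a: "a \<in> cObj A" "a' \<in> cObj A" "a'' \<in> cObj A"
    and p: "p \<in> cArr B" "cDom B p = b" "cCod B p = FO F a"
    and p': "p' \<in> cArr B" "cDom B p' = b'" "cCod B p' = FO F a'"
    and p'': "p'' \<in> cArr B" "cDom B p'' = b''" "cCod B p'' = FO F a''"
  shows "cComp B (FA F (cAssoc A a a' a''))
           (cComp B (Mu F (cTo A a a') a'') (cTa B (cComp B (Mu F a a') (cTa B p p')) p''))
       = cComp B (cComp B (Mu F a (cTo A a' a'')) (cTa B p (cComp B (Mu F a' a'') (cTa B p' p''))))
           (cAssoc B b b' b'')"
proof -
  have b: "b \<in> cObj B" "b' \<in> cObj B" "b'' \<in> cObj B"
    using p p' p'' by (metis B.dom_obj)+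
  have left: "cTa B (cComp B (Mu F a a') (cTa B p p')) p''
      = cComp B (cTa B (Mu F a a') (cId B (FO F a''))) (cTa B (cTa B p p') p'')"
    using B.interchange[of "cTa B p p'" "Mu F a a'" p'' "cId B (FO F a'')"] a p p' p'' by simp
  have right: "cTa B p (cComp B (Mu F a' a'') (cTa B p' p''))
      = cComp B (cTa B (cId B (FO F a)) (Mu F a' a'')) (cTa B p (cTa B p' p''))"
    using B.interchange[of p "cId B (FO F a)" "cTa B p' p''" "Mu F a' a''"] a p p' p'' by simp
  have coh: "cComp B (FA F (cAssoc A a a' a''))
        (cComp B (Mu F (cTo A a a') a'') (cTa B (Mu F a a') (cId B (FO F a''))))
      = cComp B (Mu F a (cTo A a' a''))
          (cComp B (cTa B (cId B (FO F a)) (Mu F a' a'')) (cAssoc B (FO F a) (FO F a') (FO F a'')))"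
    using assoc_coherence a by simp
  have nat: "cComp B (cAssoc B (FO F a) (FO F a') (FO F a'')) (cTa B (cTa B p p') p'')
      = cComp B (cTa B p (cTa B p' p'')) (cAssoc B b b' b'')"
    using B.assoc_naturality[of p p' p''] p p' p'' by simp
  show ?thesis
    unfolding left right
    using a b p p' p'' by (simp add: B.comp_reassoc3[OF coh] B.comp_reassoc[OF nat] nat)
qed

lemma lunit_square_commutes:
  assumes a: "a \<in> cObj A" and p: "p \<in> cArr B" "cDom B p = b" "cCod B p = FO F a"
  shows "cComp B (FA F (cLunit A a)) (cComp B (Mu F (cUnit A) a) (cTa B (Eps F) p))
       = cComp B p (cLunit B b)"
proof -
  have b: "b \<in> cObj B"
    using p by (metis B.dom_obj)
  have split: "cTa B (Eps F) p = cComp B (cTa B (Eps F) (cId B (FO F a))) (cTa B (cId B (cUnit B)) p)"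
    using B.interchange[of "cId B (cUnit B)" "Eps F" p "cId B (FO F a)"] a p by simp
  have coh: "cComp B (FA F (cLunit A a)) (cComp B (Mu F (cUnit A) a) (cTa B (Eps F) (cId B (FO F a))))
      = cLunit B (FO F a)"
    using lunit_coherence a by simp
  have nat: "cComp B (cLunit B (FO F a)) (cTa B (cId B (cUnit B)) p) = cComp B p (cLunit B b)"
    using B.lunit_naturality[of p] p by simp
  show ?thesis
    unfolding split using a b p by (simp add: B.comp_reassoc3[OF coh] nat)
qed

lemma runit_square_commutes:
  assumes a: "a \<in> cObj A" and p: "p \<in> cArr B" "cDom B p = b" "cCod B p = FO F a"
  shows "cComp B (FA F (cRunit A a)) (cComp B (Mu F a (cUnit A)) (cTa B p (Eps F)))
       = cComp B p (cRunit B b)"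
proof -
  have b: "b \<in> cObj B"
    using p by (metis B.dom_obj)
  have split: "cTa B p (Eps F) = cComp B (cTa B (cId B (FO F a)) (Eps F)) (cTa B p (cId B (cUnit B)))"
    using B.interchange[of p "cId B (FO F a)" "cId B (cUnit B)" "Eps F"] a p by simp
  have coh: "cComp B (FA F (cRunit A a)) (cComp B (Mu F a (cUnit A)) (cTa B (cId B (FO F a)) (Eps F)))
      = cRunit B (FO F a)"
    using runit_coherence a by simp
  have nat: "cComp B (cRunit B (FO F a)) (cTa B p (cId B (cUnit B))) = cComp B p (cRunit B b)"
    using B.runit_naturality[of p] p by simp
  show ?thesis
    unfolding split using a b p by (simp add: B.comp_reassoc3[OF coh] nat)
qed

end

section \<open>The iso-comma category of a strong monoidal functor\<close>

text \<open>An arrow \<open>(f, g)\<close> of the iso-comma category is stored as \<open>(source, (f, g), target)\<close>,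
  since the two components alone do not determine the triples \<open>(a, b, p)\<close> it connects.\<close>

definition iso_comma_obj ::
  "('a, 'am) moncat \<Rightarrow> ('b, 'bm) moncat \<Rightarrow> ('a, 'am, 'b, 'bm) mfun \<Rightarrow> ('a \<times> 'b \<times> 'bm) set" where
  "iso_comma_obj A B F = {(a, b, p). a \<in> cObj A \<and> b \<in> cObj B \<and> p \<in> hom B b (FO F a) \<and> iso B p}"

definition iso_comma_arr :: "('a, 'am) moncat \<Rightarrow> ('b, 'bm) moncat \<Rightarrow> ('a, 'am, 'b, 'bm) mfun \<Rightarrow>
    (('a \<times> 'b \<times> 'bm) \<times> ('am \<times> 'bm) \<times> ('a \<times> 'b \<times> 'bm)) set" where
  "iso_comma_arr A B F = {((a, b, p), (f, g), (a', b', p')).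
     (a, b, p) \<in> iso_comma_obj A B F \<and> (a', b', p') \<in> iso_comma_obj A B F
   \<and> f \<in> hom A a a' \<and> g \<in> hom B b b' \<and> cComp B (FA F f) p = cComp B p' g}"

definition iso_comma_tensor :: "('a, 'am) moncat \<Rightarrow> ('b, 'bm) moncat \<Rightarrow> ('a, 'am, 'b, 'bm) mfun \<Rightarrow>
    'a \<times> 'b \<times> 'bm \<Rightarrow> 'a \<times> 'b \<times> 'bm \<Rightarrow> 'a \<times> 'b \<times> 'bm" where
  "iso_comma_tensor A B F = (\<lambda>(a, b, p) (a', b', p').
     (cTo A a a', cTo B b b', cComp B (Mu F a a') (cTa B p p')))"

definition iso_comma :: "('a, 'am) moncat \<Rightarrow> ('b, 'bm) moncat \<Rightarrow> ('a, 'am, 'b, 'bm) mfun \<Rightarrow>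
    ('a \<times> 'b \<times> 'bm, ('a \<times> 'b \<times> 'bm) \<times> ('am \<times> 'bm) \<times> ('a \<times> 'b \<times> 'bm)) moncat" where
  "iso_comma A B F =
    (let T = iso_comma_tensor A B F; I = (cUnit A, cUnit B, Eps F) in
     \<lparr>cObj = iso_comma_obj A B F, cArr = iso_comma_arr A B F,
      cDom = fst, cCod = (\<lambda>x. snd (snd x)),
      cId = (\<lambda>X. (X, (cId A (fst X), cId B (fst (snd X))), X)),
      cComp = (\<lambda>(_, (f', g'), Z) (X, (f, g), _). (X, (cComp A f' f, cComp B g' g), Z)),
      cTo = T,
      cTa = (\<lambda>(X, (f, g), Y) (X', (f', g'), Y'). (T X X', (cTa A f f', cTa B g g'), T Y Y')),
      cUnit = I,
      cAssoc = (\<lambda>X Y Z. (T (T X Y) Z, (cAssoc A (fst X) (fst Y) (fst Z),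
                         cAssoc B (fst (snd X)) (fst (snd Y)) (fst (snd Z))), T X (T Y Z))),
      cLunit = (\<lambda>X. (T I X, (cLunit A (fst X), cLunit B (fst (snd X))), X)),
      cRunit = (\<lambda>X. (T X I, (cRunit A (fst X), cRunit B (fst (snd X))), X))\<rparr>)"

definition iso_comma_fst :: "('a, 'am) moncat \<Rightarrow>
    ('a \<times> 'b \<times> 'bm, ('a \<times> 'b \<times> 'bm) \<times> ('am \<times> 'bm) \<times> ('a \<times> 'b \<times> 'bm), 'a, 'am) mfun" where
  "iso_comma_fst A = \<lparr>FO = fst, FA = (\<lambda>x. fst (fst (snd x))),
     Mu = (\<lambda>X Y. cId A (cTo A (fst X) (fst Y))), Eps = cId A (cUnit A)\<rparr>"

definition iso_comma_snd :: "('b, 'bm) moncat \<Rightarrow>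
    ('a \<times> 'b \<times> 'bm, ('a \<times> 'b \<times> 'bm) \<times> ('am \<times> 'bm) \<times> ('a \<times> 'b \<times> 'bm), 'b, 'bm) mfun" where
  "iso_comma_snd B = \<lparr>FO = (\<lambda>X. fst (snd X)), FA = (\<lambda>x. snd (fst (snd x))),
     Mu = (\<lambda>X Y. cId B (cTo B (fst (snd X)) (fst (snd Y)))), Eps = cId B (cUnit B)\<rparr>"

lemma iso_comma_fst_simps [simp]:
  "FO (iso_comma_fst A) = fst" "FA (iso_comma_fst A) x = fst (fst (snd x))"
  "Mu (iso_comma_fst A) X Y = cId A (cTo A (fst X) (fst Y))" "Eps (iso_comma_fst A) = cId A (cUnit A)"
  by (simp_all add: iso_comma_fst_def)

lemma iso_comma_snd_simps [simp]:
  "FO (iso_comma_snd B) = (\<lambda>X. fst (snd X))" "FA (iso_comma_snd B) x = snd (fst (snd x))"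
  "Mu (iso_comma_snd B) X Y = cId B (cTo B (fst (snd X)) (fst (snd Y)))"
  "Eps (iso_comma_snd B) = cId B (cUnit B)"
  by (simp_all add: iso_comma_snd_def)

context strong_monoidal
begin

abbreviation "C \<equiv> iso_comma A B F"

lemma iso_comma_tensor_simp [simp]:
  "iso_comma_tensor A B F (a, b, p) (a', b', p') = (cTo A a a', cTo B b b', cComp B (Mu F a a') (cTa B p p'))"
  by (simp add: iso_comma_tensor_def)

lemma iso_comma_simps [simp]:
  "cObj C = iso_comma_obj A B F" "cArr C = iso_comma_arr A B F"
  "cDom C = fst" "cCod C = (\<lambda>x. snd (snd x))"
  "cId C X = (X, (cId A (fst X), cId B (fst (snd X))), X)"
  "cComp C y x = (fst x, (cComp A (fst (fst (snd y))) (fst (fst (snd x))),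
                          cComp B (snd (fst (snd y))) (snd (fst (snd x)))), snd (snd y))"
  "cTo C = iso_comma_tensor A B F"
  "cTa C x y = (iso_comma_tensor A B F (fst x) (fst y),
                (cTa A (fst (fst (snd x))) (fst (fst (snd y))), cTa B (snd (fst (snd x))) (snd (fst (snd y)))),
                iso_comma_tensor A B F (snd (snd x)) (snd (snd y)))"
  "cUnit C = (cUnit A, cUnit B, Eps F)"
  "cAssoc C X Y Z = (iso_comma_tensor A B F (iso_comma_tensor A B F X Y) Z,
                     (cAssoc A (fst X) (fst Y) (fst Z), cAssoc B (fst (snd X)) (fst (snd Y)) (fst (snd Z))),
                     iso_comma_tensor A B F X (iso_comma_tensor A B F Y Z))"
  "cLunit C X = (iso_comma_tensor A B F (cUnit A, cUnit B, Eps F) X,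
                 (cLunit A (fst X), cLunit B (fst (snd X))), X)"
  "cRunit C X = (iso_comma_tensor A B F X (cUnit A, cUnit B, Eps F),
                 (cRunit A (fst X), cRunit B (fst (snd X))), X)"
  by (simp_all add: iso_comma_def Let_def split: prod.split)

lemma iso_comma_obj_iff [simp]:
  "(a, b, p) \<in> iso_comma_obj A B F \<longleftrightarrow>
     a \<in> cObj A \<and> b \<in> cObj B \<and> p \<in> cArr B \<and> cDom B p = b \<and> cCod B p = FO F a \<and> iso B p"
  by (auto simp: iso_comma_obj_def)

lemma iso_comma_arr_iff [simp]:
  "((a, b, p), (f, g), (a', b', p')) \<in> iso_comma_arr A B F \<longleftrightarrow>
     (a, b, p) \<in> iso_comma_obj A B F \<and> (a', b', p') \<in> iso_comma_obj A B F
   \<and> f \<in> cArr A \<and> cDom A f = a \<and> cCod A f = a' \<and> g \<in> cArr B \<and> cDom B g = b \<and> cCod B g = b'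
   \<and> cComp B (FA F f) p = cComp B p' g"
  by (simp add: iso_comma_arr_def)

lemma ball_iso_comma_obj:
  "(\<forall>X\<in>iso_comma_obj A B F. P X) \<longleftrightarrow> (\<forall>a b p. (a, b, p) \<in> iso_comma_obj A B F \<longrightarrow> P (a, b, p))"
  by auto

lemma ball_iso_comma_arr:
  "(\<forall>x\<in>iso_comma_arr A B F. P x) \<longleftrightarrow>
   (\<forall>a b p f g a' b' p'. ((a, b, p), (f, g), (a', b', p')) \<in> iso_comma_arr A B F
      \<longrightarrow> P ((a, b, p), (f, g), (a', b', p')))"
  by auto

lemma iso_comma_tensor_obj:
  "(a, b, p) \<in> iso_comma_obj A B F \<Longrightarrow> (a', b', p') \<in> iso_comma_obj A B F \<Longrightarrow>
   iso_comma_tensor A B F (a, b, p) (a', b', p') \<in> iso_comma_obj A B F"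
  by (auto intro!: B.iso_comp B.iso_tensor Mu_iso)

lemma iso_comma_unit_obj: "(cUnit A, cUnit B, Eps F) \<in> iso_comma_obj A B F"
  by (simp add: Eps_iso)

lemma iso_comma_comp_arr:
  assumes "((a, b, p), (f, g), (a', b', p')) \<in> iso_comma_arr A B F"
    and "((a', b', p'), (f', g'), (a'', b'', p'')) \<in> iso_comma_arr A B F"
  shows "((a, b, p), (cComp A f' f, cComp B g' g), (a'', b'', p'')) \<in> iso_comma_arr A B F"
proof -
  have h: "(a, b, p) \<in> iso_comma_obj A B F" "(a'', b'', p'') \<in> iso_comma_obj A B F"
    "f \<in> cArr A" "cDom A f = a" "cCod A f = a'" "g \<in> cArr B" "cDom B g = b" "cCod B g = b'"
    "f' \<in> cArr A" "cDom A f' = a'" "cCod A f' = a''" "g' \<in> cArr B" "cDom B g' = b'" "cCod B g' = b''"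
    "p \<in> cArr B" "p' \<in> cArr B" "p'' \<in> cArr B" "cCod B p = FO F a" "cCod B p' = FO F a'"
    "cDom B p' = b'" "cDom B p'' = b''"
    and square1: "cComp B (FA F f) p = cComp B p' g"
    and square2: "cComp B (FA F f') p' = cComp B p'' g'"
    using assms by simp_all
  have "cComp B (FA F (cComp A f' f)) p = cComp B (FA F f') (cComp B (FA F f) p)"
    using h by simp
  also have "\<dots> = cComp B (cComp B (FA F f') p') g"
    using h square1 by simp
  also have "\<dots> = cComp B p'' (cComp B g' g)"
    using h square2 by simp
  finally show ?thesis
    using h by simp
qed

lemma iso_comma_category: "category C"
  unfolding category_def iso_comma_simps(1-4)
proof (intro conjI)
  show "\<forall>x\<in>iso_comma_arr A B F. \<forall>y\<in>iso_comma_arr A B F. snd (snd x) = fst y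
          \<longrightarrow> cComp C y x \<in> hom C (fst x) (snd (snd y))"
    unfolding ball_iso_comma_arr
    by (auto simp del: iso_comma_arr_iff simp: iso_comma_comp_arr)
qed (auto simp: ball_iso_comma_obj ball_iso_comma_arr)

lemma iso_comma_isoI:
  assumes x: "x \<in> cArr C" and f: "iso A (fst (fst (snd x)))" and g: "iso B (snd (fst (snd x)))"
  shows "iso C x"
proof -
  obtain a b p f g a' b' p' where x_eq: "x = ((a, b, p), (f, g), (a', b', p'))"
    by (metis prod.collapse)
  have h: "a \<in> cObj A" "a' \<in> cObj A" "b \<in> cObj B" "b' \<in> cObj B" "p \<in> cArr B" "p' \<in> cArr B"
    "cDom B p = b" "cCod B p = FO F a" "cDom B p' = b'" "cCod B p' = FO F a'"
    "f \<in> cArr A" "cDom A f = a" "cCod A f = a'" "g \<in> cArr B" "cDom B g = b" "cCod B g = b'"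
    and square: "cComp B (FA F f) p = cComp B p' g" and f: "iso A f" and g: "iso B g"
    using x f g unfolding x_eq by simp_all
  obtain f' where f': "f' \<in> cArr A" "cDom A f' = a'" "cCod A f' = a"
    "cComp A f' f = cId A a" "cComp A f f' = cId A a'"
    using A.iso_inverseE[OF f] h by auto
  obtain g' where g': "g' \<in> cArr B" "cDom B g' = b'" "cCod B g' = b"
    "cComp B g' g = cId B b" "cComp B g g' = cId B b'"
    using B.iso_inverseE[OF g] h by auto
  have Ff: "cComp B (FA F f') (FA F f) = cId B (FO F a)"
    using FA_comp[of f f'] f' h by simp
  have "cComp B (FA F f') p' = cComp B p g'"
  proof (rule B.iso_cancel_right[OF g])
    have "cComp B (cComp B (FA F f') p') g = cComp B (FA F f') (cComp B (FA F f) p)"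
      using h f' square by simp
    also have "\<dots> = cComp B (cComp B p g') g"
      using h f' g' by (simp add: B.comp_reassoc[OF Ff])
    finally show "cComp B (cComp B (FA F f') p') g = cComp B (cComp B p g') g" .
  qed (use h f' g' in auto)
  then have "((a', b', p'), (f', g'), (a, b, p)) \<in> iso_comma_arr A B F"
    using x h f' g' unfolding x_eq by simp
  then show ?thesis
    unfolding x_eq
    by (intro isoI[where g = "((a', b', p'), (f', g'), (a, b, p))"]) (use x f' g' in \<open>auto simp: x_eq\<close>)
qed

lemma iso_comma_tensor_arr:
  assumes x: "x \<in> cArr C" and y: "y \<in> cArr C"
  shows "cTa C x y \<in> hom C (cTo C (cDom C x) (cDom C y)) (cTo C (cCod C x) (cCod C y))"
proof -
  obtain a1 b1 p1 f g a2 b2 p2 where x_eq: "x = ((a1, b1, p1), (f, g), (a2, b2, p2))"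
    by (metis prod.collapse)
  obtain a1' b1' q1 f' g' a2' b2' q2 where y_eq: "y = ((a1', b1', q1), (f', g'), (a2', b2', q2))"
    by (metis prod.collapse)
  have "iso_comma_tensor A B F (a1, b1, p1) (a1', b1', q1) \<in> iso_comma_obj A B F"
    "iso_comma_tensor A B F (a2, b2, p2) (a2', b2', q2) \<in> iso_comma_obj A B F"
    using x y unfolding x_eq y_eq by (simp_all del: iso_comma_tensor_simp add: iso_comma_tensor_obj)
  moreover have "cComp B (FA F (cTa A f f')) (cComp B (Mu F a1 a1') (cTa B p1 q1))
       = cComp B (cComp B (Mu F a2 a2') (cTa B p2 q2)) (cTa B g g')"
    by (rule tensor_square_commutes) (use x y in \<open>simp_all add: x_eq y_eq\<close>)
  ultimately show ?thesis
    using x y unfolding x_eq y_eq by (simp del: iso_comma_obj_iff)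
qed

lemma iso_comma_assoc:
  assumes X: "X \<in> cObj C" and Y: "Y \<in> cObj C" and Z: "Z \<in> cObj C"
  shows "cAssoc C X Y Z \<in> hom C (cTo C (cTo C X Y) Z) (cTo C X (cTo C Y Z)) \<and> iso C (cAssoc C X Y Z)"
proof -
  obtain a b p a' b' p' a'' b'' p''
    where X_eq: "X = (a, b, p)" and Y_eq: "Y = (a', b', p')" and Z_eq: "Z = (a'', b'', p'')"
    by (metis prod.collapse)
  have "iso_comma_tensor A B F (iso_comma_tensor A B F (a, b, p) (a', b', p')) (a'', b'', p'')
          \<in> iso_comma_obj A B F"
     "iso_comma_tensor A B F (a, b, p) (iso_comma_tensor A B F (a', b', p') (a'', b'', p''))
          \<in> iso_comma_obj A B F"
    using iso_comma_tensor_obj X Y Z unfolding X_eq Y_eq Z_eq by (metis iso_comma_tensor_simp iso_comma_simps(1))+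
  moreover have "cComp B (FA F (cAssoc A a a' a''))
      (cComp B (Mu F (cTo A a a') a'') (cTa B (cComp B (Mu F a a') (cTa B p p')) p''))
    = cComp B (cComp B (Mu F a (cTo A a' a'')) (cTa B p (cComp B (Mu F a' a'') (cTa B p' p''))))
        (cAssoc B b b' b'')"
    by (rule assoc_square_commutes) (use X Y Z in \<open>simp_all add: X_eq Y_eq Z_eq\<close>)
  ultimately have "cAssoc C X Y Z \<in> hom C (cTo C (cTo C X Y) Z) (cTo C X (cTo C Y Z))"
    using X Y Z unfolding X_eq Y_eq Z_eq by (simp del: iso_comma_obj_iff) (use X Y Z in \<open>simp add: X_eq Y_eq Z_eq\<close>)
  moreover have "iso C (cAssoc C X Y Z)"
    using calculation X Y Z
    by (intro iso_comma_isoI) (simp_all add: X_eq Y_eq Z_eq A.assoc_iso B.assoc_iso)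
  ultimately show ?thesis
    by blast
qed

lemma iso_comma_lunit:
  assumes X: "X \<in> cObj C"
  shows "cLunit C X \<in> hom C (cTo C (cUnit C) X) X \<and> iso C (cLunit C X)"
proof -
  obtain a b p where X_eq: "X = (a, b, p)"
    by (metis prod.collapse)
  have "iso_comma_tensor A B F (cUnit A, cUnit B, Eps F) (a, b, p) \<in> iso_comma_obj A B F"
    using iso_comma_tensor_obj iso_comma_unit_obj X unfolding X_eq by auto
  moreover have "cComp B (FA F (cLunit A a)) (cComp B (Mu F (cUnit A) a) (cTa B (Eps F) p))
      = cComp B p (cLunit B b)"
    by (rule lunit_square_commutes) (use X in \<open>simp_all add: X_eq\<close>)
  ultimately have "cLunit C X \<in> hom C (cTo C (cUnit C) X) X"
    using X unfolding X_eq by (simp del: iso_comma_obj_iff) (use X in \<open>simp add: X_eq\<close>)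
  moreover have "iso C (cLunit C X)"
    using calculation X by (intro iso_comma_isoI) (simp_all add: X_eq A.lunit_iso B.lunit_iso)
  ultimately show ?thesis
    by blast
qed

lemma iso_comma_runit:
  assumes X: "X \<in> cObj C"
  shows "cRunit C X \<in> hom C (cTo C X (cUnit C)) X \<and> iso C (cRunit C X)"
proof -
  obtain a b p where X_eq: "X = (a, b, p)"
    by (metis prod.collapse)
  have "iso_comma_tensor A B F (a, b, p) (cUnit A, cUnit B, Eps F) \<in> iso_comma_obj A B F"
    using iso_comma_tensor_obj iso_comma_unit_obj X unfolding X_eq by auto
  moreover have "cComp B (FA F (cRunit A a)) (cComp B (Mu F a (cUnit A)) (cTa B p (Eps F)))
      = cComp B p (cRunit B b)"
    by (rule runit_square_commutes) (use X in \<open>simp_all add: X_eq\<close>)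
  ultimately have "cRunit C X \<in> hom C (cTo C X (cUnit C)) X"
    using X unfolding X_eq by (simp del: iso_comma_obj_iff) (use X in \<open>simp add: X_eq\<close>)
  moreover have "iso C (cRunit C X)"
    using calculation X by (intro iso_comma_isoI) (simp_all add: X_eq A.runit_iso B.runit_iso)
  ultimately show ?thesis
    by blast
qed

lemma iso_comma_assoc_naturality:
  assumes "x \<in> cArr C" "y \<in> cArr C" "z \<in> cArr C"
  shows "cComp C (cAssoc C (cCod C x) (cCod C y) (cCod C z)) (cTa C (cTa C x y) z)
       = cComp C (cTa C x (cTa C y z)) (cAssoc C (cDom C x) (cDom C y) (cDom C z))"
proof -
  obtain a1 b1 p1 f g a2 b2 p2 where x: "x = ((a1, b1, p1), (f, g), (a2, b2, p2))"
    by (metis prod.collapse)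
  obtain a1' b1' p1' f' g' a2' b2' p2' where y: "y = ((a1', b1', p1'), (f', g'), (a2', b2', p2'))"
    by (metis prod.collapse)
  obtain a1'' b1'' p1'' f'' g'' a2'' b2'' p2'' where z: "z = ((a1'', b1'', p1''), (f'', g''), (a2'', b2'', p2''))"
    by (metis prod.collapse)
  show ?thesis
    using assms A.assoc_naturality[of f f' f''] B.assoc_naturality[of g g' g''] unfolding x y z by simp
qed

lemma iso_comma_lunit_naturality:
  assumes "x \<in> cArr C"
  shows "cComp C (cLunit C (cCod C x)) (cTa C (cId C (cUnit C)) x) = cComp C x (cLunit C (cDom C x))"
proof -
  obtain a1 b1 p1 f g a2 b2 p2 where x: "x = ((a1, b1, p1), (f, g), (a2, b2, p2))"
    by (metis prod.collapse)
  show ?thesis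
    using assms A.lunit_naturality[of f] B.lunit_naturality[of g] unfolding x by simp
qed

lemma iso_comma_runit_naturality:
  assumes "x \<in> cArr C"
  shows "cComp C (cRunit C (cCod C x)) (cTa C x (cId C (cUnit C))) = cComp C x (cRunit C (cDom C x))"
proof -
  obtain a1 b1 p1 f g a2 b2 p2 where x: "x = ((a1, b1, p1), (f, g), (a2, b2, p2))"
    by (metis prod.collapse)
  show ?thesis
    using assms A.runit_naturality[of f] B.runit_naturality[of g] unfolding x by simp
qed

lemma iso_comma_pentagon:
  assumes "X \<in> cObj C" "Y \<in> cObj C" "Z \<in> cObj C" "W \<in> cObj C"
  shows "cComp C (cAssoc C X Y (cTo C Z W)) (cAssoc C (cTo C X Y) Z W)
       = cComp C (cTa C (cId C X) (cAssoc C Y Z W))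
           (cComp C (cAssoc C X (cTo C Y Z) W) (cTa C (cAssoc C X Y Z) (cId C W)))"
proof -
  obtain a b p a' b' p' a'' b'' p'' a3 b3 p3
    where "X = (a, b, p)" "Y = (a', b', p')" "Z = (a'', b'', p'')" "W = (a3, b3, p3)"
    by (metis prod.collapse)
  then show ?thesis
    using assms A.pentagon[of a a' a'' a3] B.pentagon[of b b' b'' b3] by simp
qed

lemma iso_comma_triangle:
  assumes "X \<in> cObj C" "Y \<in> cObj C"
  shows "cComp C (cTa C (cId C X) (cLunit C Y)) (cAssoc C X (cUnit C) Y) = cTa C (cRunit C X) (cId C Y)"
proof -
  obtain a b p a' b' p' where "X = (a, b, p)" "Y = (a', b', p')"
    by (metis prod.collapse)
  then show ?thesis
    using assms A.triangle[of a a'] B.triangle[of b b'] by simp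
qed

lemma iso_comma_monoidal: "monoidal_category C"
  unfolding monoidal_category_def
proof (intro conjI)
  show "\<forall>X\<in>cObj C. \<forall>Y\<in>cObj C. cTo C X Y \<in> cObj C"
    unfolding iso_comma_simps ball_iso_comma_obj by (blast intro: iso_comma_tensor_obj)
  show "\<forall>X\<in>cObj C. \<forall>Y\<in>cObj C. cTa C (cId C X) (cId C Y) = cId C (cTo C X Y)"
    by (auto simp: ball_iso_comma_obj)
  show "\<forall>x\<in>cArr C. \<forall>x'\<in>cArr C. \<forall>y\<in>cArr C. \<forall>y'\<in>cArr C. cCod C x = cDom C x' \<and> cCod C y = cDom C y' \<longrightarrow>
          cTa C (cComp C x' x) (cComp C y' y) = cComp C (cTa C x' y') (cTa C x y)"
    by (auto simp: ball_iso_comma_arr A.interchange B.interchange)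
  show "cUnit C \<in> cObj C"
    using iso_comma_unit_obj by simp
qed (use iso_comma_category iso_comma_tensor_arr iso_comma_assoc iso_comma_lunit iso_comma_runit
      iso_comma_assoc_naturality iso_comma_lunit_naturality iso_comma_runit_naturality
      iso_comma_pentagon iso_comma_triangle in blast)+

lemma iso_comma_fst_functor: "is_functor C A (iso_comma_fst A)"
  unfolding is_functor_def iso_comma_simps(1,2) ball_iso_comma_obj ball_iso_comma_arr by auto

lemma iso_comma_snd_functor: "is_functor C B (iso_comma_snd B)"
  unfolding is_functor_def iso_comma_simps(1,2) ball_iso_comma_obj ball_iso_comma_arr by auto

lemma iso_comma_fst_strict: "strict_monoidal_functor C A (iso_comma_fst A)"
  unfolding strict_monoidal_functor_def strong_monoidal_functor_def
  using iso_comma_monoidal A.monoidal iso_comma_fst_functor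
  by (auto simp: ball_iso_comma_obj ball_iso_comma_arr A.iso_id)

lemma iso_comma_snd_strict: "strict_monoidal_functor C B (iso_comma_snd B)"
  unfolding strict_monoidal_functor_def strong_monoidal_functor_def
  using iso_comma_monoidal B.monoidal iso_comma_snd_functor
  by (auto simp: ball_iso_comma_obj ball_iso_comma_arr B.iso_id)

lemma iso_comma_homE:
  assumes "x \<in> hom C (a, b, p) (a', b', p')"
  obtains f g where "x = ((a, b, p), (f, g), (a', b', p'))"
    and "((a, b, p), (f, g), (a', b', p')) \<in> iso_comma_arr A B F"
  using assms by (metis in_hom iso_comma_simps(2-4) prod.collapse)

lemma iso_comma_fst_lift:
  assumes X: "(a, b, p) \<in> cObj C" and Y: "(a', b', p') \<in> cObj C" and f: "f \<in> hom A a a'"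
  shows "\<exists>g. ((a, b, p), (f, g), (a', b', p')) \<in> cArr C"
proof -
  have h: "b \<in> cObj B" "p \<in> cArr B" "cDom B p = b" "cCod B p = FO F a"
    "p' \<in> cArr B" "cDom B p' = b'" "cCod B p' = FO F a'" "iso B p'"
    using X Y by auto
  obtain q where q: "q \<in> cArr B" "cDom B q = FO F a'" "cCod B q = b'" "cComp B p' q = cId B (FO F a')"
    using B.iso_inverseE[OF h(8)] h by auto
  let ?g = "cComp B q (cComp B (FA F f) p)"
  have "cComp B (FA F f) p = cComp B p' ?g"
    using h q f by (simp add: B.comp_reassoc[OF q(4)])
  then have "((a, b, p), (f, ?g), (a', b', p')) \<in> cArr C"
    using X Y f h q by simp
  then show ?thesis ..
qed

lemma iso_comma_snd_unique:
  assumes "((a, b, p), (f, g), (a', b', p')) \<in> cArr C" and "((a, b, p), (f, g'), (a', b', p')) \<in> cArr C"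
  shows "g = g'"
proof (rule B.iso_cancel_left[of p'])
  show "cComp B p' g = cComp B p' g'"
    using assms by simp
qed (use assms in simp_all)

lemma iso_comma_fst_surjective_equivalence: "surjective_equivalence C A (iso_comma_fst A)"
  unfolding surjective_equivalence_def
proof (intro conjI ballI impI iso_comma_fst_functor)
  fix a assume "a \<in> cObj A"
  then have "(a, FO F a, cId B (FO F a)) \<in> cObj C"
    by (simp add: B.iso_id)
  then show "\<exists>X\<in>cObj C. FO (iso_comma_fst A) X = a"
    by (rule bexI[rotated]) simp
next
  fix X Y f
  assume X: "X \<in> cObj C" and Y: "Y \<in> cObj C"
    and f: "f \<in> hom A (FO (iso_comma_fst A) X) (FO (iso_comma_fst A) Y)"
  obtain a b p a' b' p' where XY: "X = (a, b, p)" "Y = (a', b', p')"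
    by (metis prod.collapse)
  have "\<exists>g. ((a, b, p), (f, g), (a', b', p')) \<in> cArr C"
    by (rule iso_comma_fst_lift) (use X Y f in \<open>simp_all del: iso_comma_obj_iff add: XY\<close>)
  then obtain g where "((a, b, p), (f, g), (a', b', p')) \<in> cArr C" ..
  then show "\<exists>x\<in>hom C X Y. FA (iso_comma_fst A) x = f"
    unfolding XY by (intro bexI[of _ "((a, b, p), (f, g), (a', b', p'))"]) (simp_all del: iso_comma_arr_iff)
next
  fix X Y x x'
  assume x: "x \<in> hom C X Y" and x': "x' \<in> hom C X Y"
    and eq: "FA (iso_comma_fst A) x = FA (iso_comma_fst A) x'"
  obtain a b p a' b' p' where XY: "X = (a, b, p)" "Y = (a', b', p')"
    by (metis prod.collapse)
  obtain f g f' g' where x_eq: "x = ((a, b, p), (f, g), (a', b', p'))"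
    and x'_eq: "x' = ((a, b, p), (f', g'), (a', b', p'))"
    and arrs: "((a, b, p), (f, g), (a', b', p')) \<in> cArr C" "((a, b, p), (f', g'), (a', b', p')) \<in> cArr C"
    using x x' unfolding XY by (metis iso_comma_homE iso_comma_simps(2))
  have "f' = f"
    using eq unfolding x_eq x'_eq by simp
  then have "g = g'"
    using iso_comma_snd_unique[of a b p f g a' b' p' g'] arrs by (simp del: iso_comma_arr_iff)
  with \<open>f' = f\<close> show "x = x'"
    unfolding x_eq x'_eq by simp
qed

end

section \<open>Monoidal equivalences\<close>

locale strong_monoidal_equivalence = strong_monoidal +
  assumes faithful: "f \<in> cArr A \<Longrightarrow> f' \<in> cArr A \<Longrightarrow> cDom A f = cDom A f' \<Longrightarrow> cCod A f = cCod A f'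
      \<Longrightarrow> FA F f = FA F f' \<Longrightarrow> f = f'"
    and full: "a \<in> cObj A \<Longrightarrow> a' \<in> cObj A \<Longrightarrow> h \<in> hom B (FO F a) (FO F a')
      \<Longrightarrow> \<exists>f\<in>hom A a a'. FA F f = h"
    and essentially_surjective: "b \<in> cObj B \<Longrightarrow> \<exists>a\<in>cObj A. \<exists>p\<in>hom B b (FO F a). iso B p"
begin

lemma iso_comma_snd_lift:
  assumes X: "(a, b, p) \<in> cObj C" and Y: "(a', b', p') \<in> cObj C" and g: "g \<in> hom B b b'"
  shows "\<exists>f. ((a, b, p), (f, g), (a', b', p')) \<in> cArr C"
proof -
  have h: "a \<in> cObj A" "a' \<in> cObj A" "p \<in> cArr B" "cDom B p = b" "cCod B p = FO F a" "iso B p"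
    "p' \<in> cArr B" "cDom B p' = b'" "cCod B p' = FO F a'"
    using X Y by auto
  obtain q where q: "q \<in> cArr B" "cDom B q = FO F a" "cCod B q = b" "cComp B q p = cId B b"
    using B.iso_inverseE[OF h(6)] h by auto
  have "cComp B p' (cComp B g q) \<in> hom B (FO F a) (FO F a')"
    using h q g by auto
  then obtain f where f: "f \<in> hom A a a'" "FA F f = cComp B p' (cComp B g q)"
    using full h by blast
  have "cComp B (FA F f) p = cComp B p' g"
    unfolding f(2) using h q g by (simp add: B.comp_reassoc[OF q(4)])
  then have "((a, b, p), (f, g), (a', b', p')) \<in> cArr C"
    using X Y f g by simp
  then show ?thesis ..
qed

lemma iso_comma_fst_unique:
  assumes x: "((a, b, p), (f, g), (a', b', p')) \<in> cArr C" and x': "((a, b, p), (f', g), (a', b', p')) \<in> cArr C"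
  shows "f = f'"
proof (rule faithful)
  show "FA F f = FA F f'"
    by (rule B.iso_cancel_right[of p]) (use x x' in simp_all)
qed (use x x' in simp_all)

lemma iso_comma_snd_surjective_equivalence: "surjective_equivalence C B (iso_comma_snd B)"
  unfolding surjective_equivalence_def
proof (intro conjI ballI impI iso_comma_snd_functor)
  fix b assume b: "b \<in> cObj B"
  then obtain a p where "a \<in> cObj A" "p \<in> hom B b (FO F a)" "iso B p"
    using essentially_surjective by blast
  with b have "(a, b, p) \<in> cObj C"
    by simp
  then show "\<exists>X\<in>cObj C. FO (iso_comma_snd B) X = b"
    by (rule bexI[rotated]) simp
next
  fix X Y g
  assume X: "X \<in> cObj C" and Y: "Y \<in> cObj C"
    and g: "g \<in> hom B (FO (iso_comma_snd B) X) (FO (iso_comma_snd B) Y)"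
  obtain a b p a' b' p' where XY: "X = (a, b, p)" "Y = (a', b', p')"
    by (metis prod.collapse)
  have "\<exists>f. ((a, b, p), (f, g), (a', b', p')) \<in> cArr C"
    by (rule iso_comma_snd_lift) (use X Y g in \<open>simp_all del: iso_comma_obj_iff add: XY\<close>)
  then obtain f where "((a, b, p), (f, g), (a', b', p')) \<in> cArr C" ..
  then show "\<exists>x\<in>hom C X Y. FA (iso_comma_snd B) x = g"
    unfolding XY by (intro bexI[of _ "((a, b, p), (f, g), (a', b', p'))"]) (simp_all del: iso_comma_arr_iff)
next
  fix X Y x x'
  assume x: "x \<in> hom C X Y" and x': "x' \<in> hom C X Y"
    and eq: "FA (iso_comma_snd B) x = FA (iso_comma_snd B) x'"
  obtain a b p a' b' p' where XY: "X = (a, b, p)" "Y = (a', b', p')"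
    by (metis prod.collapse)
  obtain f g f' g' where x_eq: "x = ((a, b, p), (f, g), (a', b', p'))"
    and x'_eq: "x' = ((a, b, p), (f', g'), (a', b', p'))"
    and arrs: "((a, b, p), (f, g), (a', b', p')) \<in> cArr C" "((a, b, p), (f', g'), (a', b', p')) \<in> cArr C"
    using x x' unfolding XY by (metis iso_comma_homE iso_comma_simps(2))
  have "g' = g"
    using eq unfolding x_eq x'_eq by simp
  then have "f = f'"
    using iso_comma_fst_unique[of a b p f g a' b' p' f'] arrs by (simp del: iso_comma_arr_iff)
  with \<open>g' = g\<close> show "x = x'"
    unfolding x_eq x'_eq by simp
qed

end

locale monoidal_equivalence = F: strong_monoidal A B F + G: strong_monoidal B A G
  for A :: "('a, 'am) moncat" and B :: "('b, 'bm) moncat" and F G +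
  fixes \<eta> :: "'a \<Rightarrow> 'am" and \<epsilon> :: "'b \<Rightarrow> 'bm"
  assumes unit_iso: "monoidal_nat_iso A A (mid A) (mcomp A F G) \<eta>"
    and counit_iso: "monoidal_nat_iso B B (mcomp B G F) (mid B) \<epsilon>"
begin

lemma unit_arr [simp]: "a \<in> cObj A \<Longrightarrow> \<eta> a \<in> cArr A"
  and unit_dom [simp]: "a \<in> cObj A \<Longrightarrow> cDom A (\<eta> a) = a"
  and unit_cod [simp]: "a \<in> cObj A \<Longrightarrow> cCod A (\<eta> a) = FO G (FO F a)"
  and unit_is_iso: "a \<in> cObj A \<Longrightarrow> iso A (\<eta> a)"
  and unit_naturality:
    "f \<in> cArr A \<Longrightarrow> cComp A (\<eta> (cCod A f)) f = cComp A (FA G (FA F f)) (\<eta> (cDom A f))"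
  using unit_iso by (auto simp: monoidal_nat_iso_def mid_def mcomp_def)

lemma counit_arr [simp]: "b \<in> cObj B \<Longrightarrow> \<epsilon> b \<in> cArr B"
  and counit_dom [simp]: "b \<in> cObj B \<Longrightarrow> cDom B (\<epsilon> b) = FO F (FO G b)"
  and counit_cod [simp]: "b \<in> cObj B \<Longrightarrow> cCod B (\<epsilon> b) = b"
  and counit_is_iso: "b \<in> cObj B \<Longrightarrow> iso B (\<epsilon> b)"
  and counit_naturality:
    "g \<in> cArr B \<Longrightarrow> cComp B (\<epsilon> (cCod B g)) (FA F (FA G g)) = cComp B g (\<epsilon> (cDom B g))"
  using counit_iso by (auto simp: monoidal_nat_iso_def mid_def mcomp_def)

lemma F_faithful:
  assumes "f \<in> cArr A" "f' \<in> cArr A" "cDom A f = cDom A f'" "cCod A f = cCod A f'" "FA F f = FA F f'"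
  shows "f = f'"
proof (rule F.A.iso_cancel_left[OF unit_is_iso[of "cCod A f"]])
  show "cComp A (\<eta> (cCod A f)) f = cComp A (\<eta> (cCod A f)) f'"
    using unit_naturality[of f] unit_naturality[of f'] assms by simp
qed (use assms in auto)

lemma G_faithful:
  assumes "g \<in> cArr B" "g' \<in> cArr B" "cDom B g = cDom B g'" "cCod B g = cCod B g'" "FA G g = FA G g'"
  shows "g = g'"
proof (rule F.B.iso_cancel_right[OF counit_is_iso[of "cDom B g"]])
  show "cComp B g (\<epsilon> (cDom B g)) = cComp B g' (\<epsilon> (cDom B g))"
    using counit_naturality[of g] counit_naturality[of g'] assms by simp
qed (use assms in auto)

lemma F_full:
  assumes a: "a \<in> cObj A" and a': "a' \<in> cObj A" and h: "h \<in> hom B (FO F a) (FO F a')"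
  shows "\<exists>f\<in>hom A a a'. FA F f = h"
proof -
  obtain k where k: "k \<in> cArr A" "cDom A k = FO G (FO F a')" "cCod A k = a'"
    "cComp A (\<eta> a') k = cId A (FO G (FO F a'))"
    using F.A.iso_inverseE[OF unit_is_iso[OF a']] a' by auto
  define f where "f = cComp A k (cComp A (FA G h) (\<eta> a))"
  have f: "f \<in> hom A a a'"
    unfolding f_def using k a a' h by auto
  have "cComp A (FA G (FA F f)) (\<eta> a) = cComp A (\<eta> a') f"
    using unit_naturality[of f] f by simp
  also have "\<dots> = cComp A (FA G h) (\<eta> a)"
    unfolding f_def using k a a' h by (simp add: F.A.comp_reassoc[OF k(4)])
  finally have "FA G (FA F f) = FA G h"
    by (rule F.A.iso_cancel_right[OF unit_is_iso[OF a], rotated -1]) (use f a a' h in auto)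
  then have "FA F f = h"
    by (rule G_faithful[rotated -1]) (use f a a' h in auto)
  with f show ?thesis
    by blast
qed

lemma F_essentially_surjective:
  assumes b: "b \<in> cObj B"
  shows "\<exists>a\<in>cObj A. \<exists>p\<in>hom B b (FO F a). iso B p"
proof -
  obtain q where q: "q \<in> cArr B" "cDom B q = b" "cCod B q = FO F (FO G b)"
    "cComp B q (\<epsilon> b) = cId B (FO F (FO G b))" "cComp B (\<epsilon> b) q = cId B b"
    using F.B.iso_inverseE[OF counit_is_iso[OF b]] b by auto
  have "iso B q"
    by (rule isoI[where g = "\<epsilon> b"]) (use q b in auto)
  with q b show ?thesis
    by (intro bexI[of _ "FO G b"]) auto
qed

sublocale strong_monoidal_equivalence A B F
  by unfold_locales (use F_faithful F_full F_essentially_surjective in auto)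

end

section \<open>Spans of strict surjective equivalences\<close>

definition obj_preimage :: "('a, 'am) moncat \<Rightarrow> ('a, 'am, 'b, 'bm) mfun \<Rightarrow> 'b \<Rightarrow> 'a" where
  "obj_preimage A P b = (SOME a. a \<in> cObj A \<and> FO P a = b)"

definition arr_preimage ::
  "('a, 'am) moncat \<Rightarrow> ('a, 'am, 'b, 'bm) mfun \<Rightarrow> 'a \<Rightarrow> 'a \<Rightarrow> 'bm \<Rightarrow> 'am" where
  "arr_preimage A P a a' g = (SOME f. f \<in> hom A a a' \<and> FA P f = g)"

locale strict_surjective_equivalence = strong_monoidal A B P
  for A :: "('a, 'am) moncat" and B :: "('b, 'bm) moncat" and P +
  assumes strict: "strict_monoidal_functor A B P"
    and surjective_equivalence: "surjective_equivalence A B P"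
begin

lemma FO_tensor [simp]: "a \<in> cObj A \<Longrightarrow> a' \<in> cObj A \<Longrightarrow> FO P (cTo A a a') = cTo B (FO P a) (FO P a')"
  and Mu_eq_id [simp]: "a \<in> cObj A \<Longrightarrow> a' \<in> cObj A \<Longrightarrow> Mu P a a' = cId B (cTo B (FO P a) (FO P a'))"
  and FO_unit [simp]: "FO P (cUnit A) = cUnit B"
  and Eps_eq_id [simp]: "Eps P = cId B (cUnit B)"
  using strict by (simp_all add: strict_monoidal_functor_def)

lemma FA_tensor [simp]: "f \<in> cArr A \<Longrightarrow> g \<in> cArr A \<Longrightarrow> FA P (cTa A f g) = cTa B (FA P f) (FA P g)"
  using Mu_naturality[of f g] by simp

lemma FA_assoc [simp]: "a \<in> cObj A \<Longrightarrow> a' \<in> cObj A \<Longrightarrow> a'' \<in> cObj A \<Longrightarrow>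
    FA P (cAssoc A a a' a'') = cAssoc B (FO P a) (FO P a') (FO P a'')"
  using assoc_coherence[of a a' a''] by simp

lemma FA_lunit [simp]: "a \<in> cObj A \<Longrightarrow> FA P (cLunit A a) = cLunit B (FO P a)"
  using lunit_coherence[of a] by simp

lemma FA_runit [simp]: "a \<in> cObj A \<Longrightarrow> FA P (cRunit A a) = cRunit B (FO P a)"
  using runit_coherence[of a] by simp

lemma obj_preimage_obj [simp]: "b \<in> cObj B \<Longrightarrow> obj_preimage A P b \<in> cObj A"
  and FO_obj_preimage [simp]: "b \<in> cObj B \<Longrightarrow> FO P (obj_preimage A P b) = b"
proof -
  assume "b \<in> cObj B"
  then have "\<exists>a. a \<in> cObj A \<and> FO P a = b"
    using surjective_equivalence unfolding surjective_equivalence_def by blast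
  then have "obj_preimage A P b \<in> cObj A \<and> FO P (obj_preimage A P b) = b"
    unfolding obj_preimage_def by (rule someI_ex)
  then show "obj_preimage A P b \<in> cObj A" "FO P (obj_preimage A P b) = b"
    by auto
qed

lemma arr_preimage:
  assumes "a \<in> cObj A" "a' \<in> cObj A" "g \<in> hom B (FO P a) (FO P a')"
  shows "arr_preimage A P a a' g \<in> hom A a a' \<and> FA P (arr_preimage A P a a' g) = g"
proof -
  have "\<exists>f. f \<in> hom A a a' \<and> FA P f = g"
    using surjective_equivalence assms unfolding surjective_equivalence_def by blast
  then show ?thesis
    unfolding arr_preimage_def by (rule someI_ex)
qed

lemma arr_preimage_arr [simp]:
    "a \<in> cObj A \<Longrightarrow> a' \<in> cObj A \<Longrightarrow> g \<in> cArr B \<Longrightarrow> cDom B g = FO P a \<Longrightarrow> cCod B g = FO P a'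
     \<Longrightarrow> arr_preimage A P a a' g \<in> cArr A"
  and arr_preimage_dom [simp]:
    "a \<in> cObj A \<Longrightarrow> a' \<in> cObj A \<Longrightarrow> g \<in> cArr B \<Longrightarrow> cDom B g = FO P a \<Longrightarrow> cCod B g = FO P a'
     \<Longrightarrow> cDom A (arr_preimage A P a a' g) = a"
  and arr_preimage_cod [simp]:
    "a \<in> cObj A \<Longrightarrow> a' \<in> cObj A \<Longrightarrow> g \<in> cArr B \<Longrightarrow> cDom B g = FO P a \<Longrightarrow> cCod B g = FO P a'
     \<Longrightarrow> cCod A (arr_preimage A P a a' g) = a'"
  and FA_arr_preimage [simp]:
    "a \<in> cObj A \<Longrightarrow> a' \<in> cObj A \<Longrightarrow> g \<in> cArr B \<Longrightarrow> cDom B g = FO P a \<Longrightarrow> cCod B g = FO P a'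
     \<Longrightarrow> FA P (arr_preimage A P a a' g) = g"
  using arr_preimage[of a a' g] by simp_all

lemma faithful:
  assumes "f \<in> cArr A" "f' \<in> cArr A" "cDom A f = cDom A f'" "cCod A f = cCod A f'" "FA P f = FA P f'"
  shows "f = f'"
  using surjective_equivalence assms unfolding surjective_equivalence_def
  by (metis A.cod_obj A.dom_obj in_hom)

lemma iso_arr_preimage_id:
  assumes a: "a \<in> cObj A" and a': "a' \<in> cObj A" and eq: "FO P a = FO P a'"
  shows "iso A (arr_preimage A P a a' (cId B (FO P a)))"
proof (rule isoI[where g = "arr_preimage A P a' a (cId B (FO P a))"])
  show "cComp A (arr_preimage A P a' a (cId B (FO P a))) (arr_preimage A P a a' (cId B (FO P a)))
        = cId A (cDom A (arr_preimage A P a a' (cId B (FO P a))))"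
    by (rule faithful) (use assms in simp_all)
  show "cComp A (arr_preimage A P a a' (cId B (FO P a))) (arr_preimage A P a' a (cId B (FO P a)))
        = cId A (cCod A (arr_preimage A P a a' (cId B (FO P a))))"
    by (rule faithful) (use assms in simp_all)
qed (use assms in simp_all)

end

definition span_functor ::
  "('c, 'cm) moncat \<Rightarrow> ('a, 'am) moncat \<Rightarrow> ('c, 'cm, 'a, 'am) mfun \<Rightarrow> ('c, 'cm, 'b, 'bm) mfun
    \<Rightarrow> ('a, 'am, 'b, 'bm) mfun" where
  "span_functor C A P Q =
    (let s = obj_preimage C P; l = arr_preimage C P in
     \<lparr>FO = (\<lambda>a. FO Q (s a)),
      FA = (\<lambda>f. FA Q (l (s (cDom A f)) (s (cCod A f)) f)),
      Mu = (\<lambda>a b. FA Q (l (cTo C (s a) (s b)) (s (cTo A a b)) (cId A (cTo A a b)))),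
      Eps = FA Q (l (cUnit C) (s (cUnit A)) (cId A (cUnit A)))\<rparr>)"

lemma span_functor_simps [simp]:
  "FO (span_functor C A P Q) a = FO Q (obj_preimage C P a)"
  "FA (span_functor C A P Q) f =
     FA Q (arr_preimage C P (obj_preimage C P (cDom A f)) (obj_preimage C P (cCod A f)) f)"
  "Mu (span_functor C A P Q) a b =
     FA Q (arr_preimage C P (cTo C (obj_preimage C P a) (obj_preimage C P b))
       (obj_preimage C P (cTo A a b)) (cId A (cTo A a b)))"
  "Eps (span_functor C A P Q) =
     FA Q (arr_preimage C P (cUnit C) (obj_preimage C P (cUnit A)) (cId A (cUnit A)))"
  by (simp_all add: span_functor_def Let_def)

locale strict_equivalence_span =
  P: strict_surjective_equivalence C A P + Q: strict_surjective_equivalence C B Q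
  for C :: "('c, 'cm) moncat" and A :: "('a, 'am) moncat" and B :: "('b, 'bm) moncat" and P Q
begin

abbreviation "preP \<equiv> obj_preimage C P"
abbreviation "liftP \<equiv> arr_preimage C P"
abbreviation "preQ \<equiv> obj_preimage C Q"
abbreviation "liftQ \<equiv> arr_preimage C Q"
abbreviation "F \<equiv> span_functor C A P Q"
abbreviation "G \<equiv> span_functor C B Q P"

lemma span_functor_is_functor: "is_functor A B F"
  unfolding is_functor_def
proof (intro conjI ballI impI)
  fix a assume a: "a \<in> cObj A"
  have "liftP (preP a) (preP a) (cId A a) = cId C (preP a)"
    by (rule P.faithful) (use a in simp_all)
  then show "FA F (cId A a) = cId B (FO F a)"
    using a by simp
next
  fix f g assume f: "f \<in> cArr A" and g: "g \<in> cArr A" and fg: "cCod A f = cDom A g"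
  have "liftP (preP (cDom A f)) (preP (cCod A g)) (cComp A g f)
      = cComp C (liftP (preP (cDom A g)) (preP (cCod A g)) g) (liftP (preP (cDom A f)) (preP (cCod A f)) f)"
    by (rule P.faithful) (use f g fg in simp_all)
  then show "FA F (cComp A g f) = cComp B (FA F g) (FA F f)"
    using f g fg by simp
qed auto

lemma span_functor_Mu_iso:
  assumes "a \<in> cObj A" "b \<in> cObj A"
  shows "iso B (Mu F a b)"
proof -
  have "iso C (liftP (cTo C (preP a) (preP b)) (preP (cTo A a b)) (cId A (FO P (cTo C (preP a) (preP b)))))"
    by (rule P.iso_arr_preimage_id) (use assms in simp_all)
  then show ?thesis
    using Q.FA_iso assms by simp
qed

lemma span_functor_Eps_iso: "iso B (Eps F)"
proof -
  have "iso C (liftP (cUnit C) (preP (cUnit A)) (cId A (FO P (cUnit C))))"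
    by (rule P.iso_arr_preimage_id) simp_all
  then show ?thesis
    using Q.FA_iso by simp
qed

lemma span_functor_Mu_naturality:
  assumes f: "f \<in> cArr A" and g: "g \<in> cArr A"
  shows "cComp B (Mu F (cCod A f) (cCod A g)) (cTa B (FA F f) (FA F g))
       = cComp B (FA F (cTa A f g)) (Mu F (cDom A f) (cDom A g))"
proof -
  let ?a = "cDom A f" and ?a' = "cCod A f" and ?b = "cDom A g" and ?b' = "cCod A g"
  have "cComp C (liftP (cTo C (preP ?a') (preP ?b')) (preP (cTo A ?a' ?b')) (cId A (cTo A ?a' ?b')))
          (cTa C (liftP (preP ?a) (preP ?a') f) (liftP (preP ?b) (preP ?b') g))
      = cComp C (liftP (preP (cTo A ?a ?b)) (preP (cTo A ?a' ?b')) (cTa A f g))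
          (liftP (cTo C (preP ?a) (preP ?b)) (preP (cTo A ?a ?b)) (cId A (cTo A ?a ?b)))"
    by (rule P.faithful) (use f g in simp_all)
  from arg_cong[OF this, of "FA Q"] show ?thesis
    using f g by simp
qed

lemma span_functor_assoc_coherence:
  assumes a: "a \<in> cObj A" and b: "b \<in> cObj A" and c: "c \<in> cObj A"
  shows "cComp B (FA F (cAssoc A a b c))
           (cComp B (Mu F (cTo A a b) c) (cTa B (Mu F a b) (cId B (FO F c))))
       = cComp B (Mu F a (cTo A b c))
           (cComp B (cTa B (cId B (FO F a)) (Mu F b c)) (cAssoc B (FO F a) (FO F b) (FO F c)))"
proof -
  have "cComp C (liftP (preP (cTo A (cTo A a b) c)) (preP (cTo A a (cTo A b c))) (cAssoc A a b c))
          (cComp C (liftP (cTo C (preP (cTo A a b)) (preP c)) (preP (cTo A (cTo A a b) c))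
                      (cId A (cTo A (cTo A a b) c)))
            (cTa C (liftP (cTo C (preP a) (preP b)) (preP (cTo A a b)) (cId A (cTo A a b))) (cId C (preP c))))
      = cComp C (liftP (cTo C (preP a) (preP (cTo A b c))) (preP (cTo A a (cTo A b c)))
                   (cId A (cTo A a (cTo A b c))))
          (cComp C (cTa C (cId C (preP a)) (liftP (cTo C (preP b) (preP c)) (preP (cTo A b c)) (cId A (cTo A b c))))
            (cAssoc C (preP a) (preP b) (preP c)))"
    by (rule P.faithful) (use a b c in simp_all)
  from arg_cong[OF this, of "FA Q"] show ?thesis
    using a b c by simp
qed

lemma span_functor_lunit_coherence:
  assumes a: "a \<in> cObj A"
  shows "cComp B (FA F (cLunit A a)) (cComp B (Mu F (cUnit A) a) (cTa B (Eps F) (cId B (FO F a))))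
       = cLunit B (FO F a)"
proof -
  have "cComp C (liftP (preP (cTo A (cUnit A) a)) (preP a) (cLunit A a))
          (cComp C (liftP (cTo C (preP (cUnit A)) (preP a)) (preP (cTo A (cUnit A) a))
                      (cId A (cTo A (cUnit A) a)))
            (cTa C (liftP (cUnit C) (preP (cUnit A)) (cId A (cUnit A))) (cId C (preP a))))
      = cLunit C (preP a)"
    by (rule P.faithful) (use a in simp_all)
  from arg_cong[OF this, of "FA Q"] show ?thesis
    using a by simp
qed

lemma span_functor_runit_coherence:
  assumes a: "a \<in> cObj A"
  shows "cComp B (FA F (cRunit A a)) (cComp B (Mu F a (cUnit A)) (cTa B (cId B (FO F a)) (Eps F)))
       = cRunit B (FO F a)"
proof -
  have "cComp C (liftP (preP (cTo A a (cUnit A))) (preP a) (cRunit A a))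
          (cComp C (liftP (cTo C (preP a) (preP (cUnit A))) (preP (cTo A a (cUnit A)))
                      (cId A (cTo A a (cUnit A))))
            (cTa C (cId C (preP a)) (liftP (cUnit C) (preP (cUnit A)) (cId A (cUnit A)))))
      = cRunit C (preP a)"
    by (rule P.faithful) (use a in simp_all)
  from arg_cong[OF this, of "FA Q"] show ?thesis
    using a by simp
qed

lemma span_functor_strong: "strong_monoidal_functor A B F"
  unfolding strong_monoidal_functor_def
  using P.B.monoidal Q.B.monoidal span_functor_is_functor span_functor_Mu_iso span_functor_Eps_iso
    span_functor_Mu_naturality span_functor_assoc_coherence
    span_functor_lunit_coherence span_functor_runit_coherence
  by simp

definition span_unit :: "'a \<Rightarrow> 'am" where
  "span_unit a = FA P (liftQ (preP a) (preQ (FO Q (preP a))) (cId B (FO Q (preP a))))"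

lemma span_unit_iso: "a \<in> cObj A \<Longrightarrow> span_unit a \<in> hom A a (FO G (FO F a)) \<and> iso A (span_unit a)"
proof -
  assume a: "a \<in> cObj A"
  have "iso C (liftQ (preP a) (preQ (FO Q (preP a))) (cId B (FO Q (preP a))))"
    by (rule Q.iso_arr_preimage_id) (use a in simp_all)
  then show ?thesis
    unfolding span_unit_def using a P.FA_iso by simp
qed

lemma span_unit_naturality:
  assumes f: "f \<in> cArr A"
  shows "cComp A (span_unit (cCod A f)) f = cComp A (FA G (FA F f)) (span_unit (cDom A f))"
proof -
  let ?Lf = "liftP (preP (cDom A f)) (preP (cCod A f)) f"
  have "cComp C (liftQ (preP (cCod A f)) (preQ (FO Q (preP (cCod A f)))) (cId B (FO Q (preP (cCod A f))))) ?Lf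
      = cComp C (liftQ (preQ (FO Q (preP (cDom A f)))) (preQ (FO Q (preP (cCod A f)))) (FA Q ?Lf))
          (liftQ (preP (cDom A f)) (preQ (FO Q (preP (cDom A f)))) (cId B (FO Q (preP (cDom A f)))))"
    by (rule Q.faithful) (use f in simp_all)
  from arg_cong[OF this, of "FA P"] show ?thesis
    using f by (simp add: span_unit_def)
qed

lemma span_unit_Mu:
  assumes a: "a \<in> cObj A" and b: "b \<in> cObj A"
  shows "cComp A (span_unit (cTo A a b)) (cId A (cTo A a b))
       = cComp A (Mu (mcomp A F G) a b) (cTa A (span_unit a) (span_unit b))"
proof -
  let ?Fa = "FO Q (preP a)" and ?Fb = "FO Q (preP b)" and ?Fab = "FO Q (preP (cTo A a b))"
  have "cComp C (liftQ (preP (cTo A a b)) (preQ ?Fab) (cId B ?Fab))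
          (liftP (cTo C (preP a) (preP b)) (preP (cTo A a b)) (cId A (cTo A a b)))
      = cComp C (liftQ (preQ (cTo B ?Fa ?Fb)) (preQ ?Fab) (Mu F a b))
          (cComp C (liftQ (cTo C (preQ ?Fa) (preQ ?Fb)) (preQ (cTo B ?Fa ?Fb)) (cId B (cTo B ?Fa ?Fb)))
            (cTa C (liftQ (preP a) (preQ ?Fa) (cId B ?Fa)) (liftQ (preP b) (preQ ?Fb) (cId B ?Fb))))"
    by (rule Q.faithful) (use a b in simp_all)
  from arg_cong[OF this, of "FA P"] show ?thesis
    using a b by (simp add: span_unit_def)
qed

lemma span_unit_Eps: "cComp A (span_unit (cUnit A)) (cId A (cUnit A)) = Eps (mcomp A F G)"
proof -
  let ?FI = "FO Q (preP (cUnit A))"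
  have "cComp C (liftQ (preP (cUnit A)) (preQ ?FI) (cId B ?FI)) (liftP (cUnit C) (preP (cUnit A)) (cId A (cUnit A)))
      = cComp C (liftQ (preQ (cUnit B)) (preQ ?FI) (Eps F)) (liftQ (cUnit C) (preQ (cUnit B)) (cId B (cUnit B)))"
    by (rule Q.faithful) simp_all
  from arg_cong[OF this, of "FA P"] show ?thesis
    by (simp add: span_unit_def)
qed

lemma span_unit_monoidal_nat_iso: "monoidal_nat_iso A A (mid A) (mcomp A F G) span_unit"
  unfolding monoidal_nat_iso_def
  using span_unit_iso span_unit_naturality span_unit_Mu span_unit_Eps by simp

definition span_counit :: "'b \<Rightarrow> 'bm" where
  "span_counit b = FA Q (liftP (preP (FO P (preQ b))) (preQ b) (cId A (FO P (preQ b))))"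

lemma span_counit_iso: "b \<in> cObj B \<Longrightarrow> span_counit b \<in> hom B (FO F (FO G b)) b \<and> iso B (span_counit b)"
proof -
  assume b: "b \<in> cObj B"
  have "iso C (liftP (preP (FO P (preQ b))) (preQ b) (cId A (FO P (preP (FO P (preQ b))))))"
    by (rule P.iso_arr_preimage_id) (use b in simp_all)
  then show ?thesis
    unfolding span_counit_def using b Q.FA_iso by simp
qed

lemma span_counit_naturality:
  assumes g: "g \<in> cArr B"
  shows "cComp B (span_counit (cCod B g)) (FA F (FA G g)) = cComp B g (span_counit (cDom B g))"
proof -
  let ?Kg = "liftQ (preQ (cDom B g)) (preQ (cCod B g)) g"
  let ?Gb = "FO P (preQ (cDom B g))" and ?Gb' = "FO P (preQ (cCod B g))"
  have "cComp C (liftP (preP ?Gb') (preQ (cCod B g)) (cId A ?Gb')) (liftP (preP ?Gb) (preP ?Gb') (FA P ?Kg))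
      = cComp C ?Kg (liftP (preP ?Gb) (preQ (cDom B g)) (cId A ?Gb))"
    by (rule P.faithful) (use g in simp_all)
  from arg_cong[OF this, of "FA Q"] show ?thesis
    using g by (simp add: span_counit_def)
qed

lemma span_counit_Mu:
  assumes a: "a \<in> cObj B" and b: "b \<in> cObj B"
  shows "cComp B (span_counit (cTo B a b)) (Mu (mcomp B G F) a b)
       = cComp B (cId B (cTo B a b)) (cTa B (span_counit a) (span_counit b))"
proof -
  let ?Ga = "FO P (preQ a)" and ?Gb = "FO P (preQ b)" and ?Gab = "FO P (preQ (cTo B a b))"
  have "cComp C (liftP (preP ?Gab) (preQ (cTo B a b)) (cId A ?Gab))
          (cComp C (liftP (preP (cTo A ?Ga ?Gb)) (preP ?Gab) (Mu G a b))
            (liftP (cTo C (preP ?Ga) (preP ?Gb)) (preP (cTo A ?Ga ?Gb)) (cId A (cTo A ?Ga ?Gb))))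
      = cComp C (liftQ (cTo C (preQ a) (preQ b)) (preQ (cTo B a b)) (cId B (cTo B a b)))
          (cTa C (liftP (preP ?Ga) (preQ a) (cId A ?Ga)) (liftP (preP ?Gb) (preQ b) (cId A ?Gb)))"
    by (rule P.faithful) (use a b in simp_all)
  from arg_cong[OF this, of "FA Q"] show ?thesis
    using a b by (simp add: span_counit_def)
qed

lemma span_counit_Eps: "cComp B (span_counit (cUnit B)) (Eps (mcomp B G F)) = cId B (cUnit B)"
proof -
  let ?GI = "FO P (preQ (cUnit B))"
  have "cComp C (liftP (preP ?GI) (preQ (cUnit B)) (cId A ?GI))
          (cComp C (liftP (preP (cUnit A)) (preP ?GI) (Eps G)) (liftP (cUnit C) (preP (cUnit A)) (cId A (cUnit A))))
      = liftQ (cUnit C) (preQ (cUnit B)) (cId B (cUnit B))"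
    by (rule P.faithful) simp_all
  from arg_cong[OF this, of "FA Q"] show ?thesis
    by (simp add: span_counit_def)
qed

lemma span_counit_monoidal_nat_iso: "monoidal_nat_iso B B (mcomp B G F) (mid B) span_counit"
  unfolding monoidal_nat_iso_def
  using span_counit_iso span_counit_naturality span_counit_Mu span_counit_Eps by simp

end

lemma strict_equivalence_span_iff:
  "strict_equivalence_span C A B P Q \<longleftrightarrow>
     monoidal_category C
   \<and> strict_monoidal_functor C A P \<and> surjective_equivalence C A P
   \<and> strict_monoidal_functor C B Q \<and> surjective_equivalence C B Q"
  by (auto simp: strict_equivalence_span_def strict_surjective_equivalence_def
      strict_surjective_equivalence_axioms_def strong_monoidal_def strict_monoidal_functor_def
      strong_monoidal_functor_def)

lemma (in strong_monoidal_equivalence) iso_comma_strict_equivalence_span: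
  "strict_equivalence_span C A B (iso_comma_fst A) (iso_comma_snd B)"
  unfolding strict_equivalence_span_iff
  using iso_comma_monoidal iso_comma_fst_strict iso_comma_fst_surjective_equivalence
    iso_comma_snd_strict iso_comma_snd_surjective_equivalence
  by blast

lemma monoidally_equivalent_imp_iso_comma_span:
  assumes "monoidally_equivalent A B"
  shows "\<exists>F. strict_equivalence_span (iso_comma A B F) A B (iso_comma_fst A) (iso_comma_snd B)"
proof -
  obtain F G \<eta> \<epsilon> where "monoidal_equivalence A B F G \<eta> \<epsilon>"
    using assms unfolding monoidally_equivalent_def
    by (auto simp: monoidal_equivalence_def monoidal_equivalence_axioms_def strong_monoidal_def)
  then interpret monoidal_equivalence A B F G \<eta> \<epsilon> .
  show ?thesis
    using iso_comma_strict_equivalence_span by blast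
qed

lemma (in strict_equivalence_span) monoidally_equivalent: "monoidally_equivalent A B"
proof -
  interpret swapped: strict_equivalence_span C B A Q P
    by unfold_locales
  show ?thesis
    unfolding monoidally_equivalent_def
    using span_functor_strong swapped.span_functor_strong
      span_unit_monoidal_nat_iso span_counit_monoidal_nat_iso
    by blast
qed

theorem theoremB:
  fixes A :: "('a, 'am) moncat" and B :: "('b, 'bm) moncat"
  assumes "monoidal_category A" and "monoidal_category B"
  shows "(monoidally_equivalent A B \<longleftrightarrow>
            (\<exists>(C :: ('a \<times> 'b \<times> 'bm, ('a \<times> 'b \<times> 'bm) \<times> ('am \<times> 'bm) \<times> ('a \<times> 'b \<times> 'bm)) moncat) P Q.
               monoidal_category C
             \<and> strict_monoidal_functor C A P \<and> surjective_equivalence C A P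
             \<and> strict_monoidal_functor C B Q \<and> surjective_equivalence C B Q))
       \<and> (\<forall>(C :: ('c, 'cm) moncat) P Q.
               monoidal_category C
             \<and> strict_monoidal_functor C A P \<and> surjective_equivalence C A P
             \<and> strict_monoidal_functor C B Q \<and> surjective_equivalence C B Q
             \<longrightarrow> monoidally_equivalent A B)"
  unfolding strict_equivalence_span_iff[symmetric]
  by (metis monoidally_equivalent_imp_iso_comma_span strict_equivalence_span.monoidally_equivalent)

end
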